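(* In the multimodal learning problem $(\mathcal{X},\mathcal{Y},\mathcal{Z})$ described below, assume $m\ge 3n$ and that among the $m$ data points there exist $3n$ points whose $x_i$ are linearly independent. Then $(\mathcal{X},\mathcal{Y},\mathcal{Z})$ is properly learnable with $\mathcal{S}$ (applied to $x$ only) in $O(mn^2)$ time: there is an algorithm which, given the data points $(x_i,y_i,z_i)_{i=1}^m$, outputs in $O(mn^2)$ time a hypothesis $h\in\mathcal{S}$ with $h(x_i)=z_i$ for all $i=1,\dots,m$.
   Context: Fix $n$. For unit vectors $v_1,v_2\in\mathbb{R}^n$, let $F(v_1,v_2)\in\mathbb{R}^{2n\times 2n}$ be a fixed orthogonal matrix whose first column is $(v_1/\sqrt2,\,v_2/\sqrt2)$, and let $Q(v_1,v_2)=\begin{pmatrix} I_n & 0\\ 0 & F(v_1,v_2)\end{pmatrix}\in\mathbb{R}^{3n\times 3n}$. The multimodal learning problem $(\mathcal{X},\mathcal{Y},\mathcal{Z})$: one is given $m$ data points $(x_i,y_i,z_i)$ with $x_i,y_i\in\mathbb{R}^{3n}$, $z_i\in\{+,-\}$, such that there exist unknown unit vectors $r_1,r_2\in\mathbb{R}^n$ and constants $c_1,c_2\in\mathbb{R}$ for which every $x_i$ is labeled $z_i$ correctly by $\hat H_1\cap\hat H_2$, where $\hat H_j=\{x\in\mathbb{R}^{3n}: \hat r_j^\top x\le c_j\}$, $\hat r_j=(r_j,\mathbf{0}_{2n})$ ('+' iff inside the intersection), and $y_i=Q(r_1,r_2)x_i$ for all $i$. The hypothesis set is $\mathcal{S}=\{h: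 h(x)=\mathrm{sgn}(\min(c_1-r_1^\top x,\,c_2-r_2^\top x)),\ c_i\in\mathbb{R},\ \|r_i\|_2=1\}$ (intersections of two half-spaces in $\mathbb{R}^{3n}$), with $\mathrm{sgn}$ of a nonnegative number taken as '+'. *)

theory Defs
  imports Complex_Main
begin

text \<open>Every elementary instruction and every loop/branch test costs one unit of time.\<close>

type_synonym state = "(nat \<Rightarrow> int) \<times> (nat \<Rightarrow> real)"

datatype iexp = IConst int | ILoad iexp | IAdd iexp iexp | ISub iexp iexp | IMul iexp iexp

datatype rexp = RConst rat | RLoad iexp | RofInt iexp | RAdd rexp rexp | RSub rexp rexp
  | RMul rexp rexp | RDiv rexp rexp | RSqrt rexp

datatype bexp = ILe iexp iexp | RLe rexp rexp | BNot bexp | BAnd bexp bexp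

datatype com = Skip | IStore iexp iexp | RStore iexp rexp | Seq com com
  | If bexp com com | While bexp com

fun ieval :: "iexp \<Rightarrow> state \<Rightarrow> int" where
  "ieval (IConst c) s = c"
| "ieval (ILoad a) s = fst s (nat (ieval a s))"
| "ieval (IAdd a b) s = ieval a s + ieval b s"
| "ieval (ISub a b) s = ieval a s - ieval b s"
| "ieval (IMul a b) s = ieval a s * ieval b s"

fun reval :: "rexp \<Rightarrow> state \<Rightarrow> real" where
  "reval (RConst c) s = of_rat c"
| "reval (RLoad a) s = snd s (nat (ieval a s))"
| "reval (RofInt a) s = of_int (ieval a s)"
| "reval (RAdd a b) s = reval a s + reval b s"
| "reval (RSub a b) s = reval a s - reval b s"
| "reval (RMul a b) s = reval a s * reval b s"
| "reval (RDiv a b) s = reval a s / reval b s"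
| "reval (RSqrt a) s = sqrt (reval a s)"

fun beval :: "bexp \<Rightarrow> state \<Rightarrow> bool" where
  "beval (ILe a b) s = (ieval a s \<le> ieval b s)"
| "beval (RLe a b) s = (reval a s \<le> reval b s)"
| "beval (BNot b) s = (\<not> beval b s)"
| "beval (BAnd a b) s = (beval a s \<and> beval b s)"

inductive exec :: "com \<Rightarrow> state \<Rightarrow> nat \<Rightarrow> state \<Rightarrow> bool" where
  exec_Skip: "exec Skip s 1 s"
| exec_IStore: "exec (IStore a e) s 1 ((fst s)(nat (ieval a s) := ieval e s), snd s)"
| exec_RStore: "exec (RStore a e) s 1 (fst s, (snd s)(nat (ieval a s) := reval e s))"
| exec_Seq: "exec c1 s t1 s1 \<Longrightarrow> exec c2 s1 t2 s2 \<Longrightarrow> exec (Seq c1 c2) s (t1 + t2) s2"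
| exec_IfT: "beval b s \<Longrightarrow> exec c1 s t s' \<Longrightarrow> exec (If b c1 c2) s (Suc t) s'"
| exec_IfF: "\<not> beval b s \<Longrightarrow> exec c2 s t s' \<Longrightarrow> exec (If b c1 c2) s (Suc t) s'"
| exec_WhileF: "\<not> beval b s \<Longrightarrow> exec (While b c) s 1 s"
| exec_WhileT: "beval b s \<Longrightarrow> exec c s t1 s1 \<Longrightarrow> exec (While b c) s1 t2 s2 \<Longrightarrow>
     exec (While b c) s (Suc (t1 + t2)) s2"

text \<open>Vectors in R^d are functions nat => real, only coordinates < d matter.
  Data point i (i < m): x i :: nat => real in R^{3n}, y i in R^{3n}, label z i
  (True = '+', False = '-').\<close>

definition unit_vec :: "nat \<Rightarrow> (nat \<Rightarrow> real) \<Rightarrow> bool" where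
  "unit_vec d v \<longleftrightarrow> (\<Sum>k<d. (v k)\<^sup>2) = 1"

text \<open>F assigns to unit vectors v1, v2 in R^n an orthogonal 2n x 2n matrix (entries F v1 v2 a b,
  a = row, b = column) whose first column is (v1/sqrt 2, v2/sqrt 2).\<close>
definition admissible_F :: "nat \<Rightarrow> ((nat \<Rightarrow> real) \<Rightarrow> (nat \<Rightarrow> real) \<Rightarrow> nat \<Rightarrow> nat \<Rightarrow> real) \<Rightarrow> bool" where
  "admissible_F n F \<longleftrightarrow> (\<forall>v1 v2. unit_vec n v1 \<and> unit_vec n v2 \<longrightarrow>
      (\<forall>a<2*n. \<forall>b<2*n. (\<Sum>l<2*n. F v1 v2 l a * F v1 v2 l b) = (if a = b then 1 else 0)) \<and>
      (\<forall>k<n. F v1 v2 k 0 = v1 k / sqrt 2 \<and> F v1 v2 (n + k) 0 = v2 k / sqrt 2))"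

text \<open>Q(v1,v2) = diag(I_n, F(v1,v2)) applied to x in R^{3n}.\<close>
definition Qmap :: "nat \<Rightarrow> ((nat \<Rightarrow> real) \<Rightarrow> (nat \<Rightarrow> real) \<Rightarrow> nat \<Rightarrow> nat \<Rightarrow> real) \<Rightarrow>
    (nat \<Rightarrow> real) \<Rightarrow> (nat \<Rightarrow> real) \<Rightarrow> (nat \<Rightarrow> real) \<Rightarrow> nat \<Rightarrow> real" where
  "Qmap n F v1 v2 x = (\<lambda>k. if k < n then x k
      else (\<Sum>b<2*n. F v1 v2 (k - n) b * x (n + b)))"

definition mm_instance :: "nat \<Rightarrow> nat \<Rightarrow> ((nat \<Rightarrow> real) \<Rightarrow> (nat \<Rightarrow> real) \<Rightarrow> nat \<Rightarrow> nat \<Rightarrow> real) \<Rightarrow>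
    (nat \<Rightarrow> nat \<Rightarrow> real) \<Rightarrow> (nat \<Rightarrow> nat \<Rightarrow> real) \<Rightarrow> (nat \<Rightarrow> bool) \<Rightarrow> bool" where
  "mm_instance n m F x y z \<longleftrightarrow>
    (\<exists>r1 r2 c1 c2. unit_vec n r1 \<and> unit_vec n r2 \<and>
      (\<forall>i<m. z i \<longleftrightarrow> ((\<Sum>k<n. r1 k * x i k) \<le> c1 \<and> (\<Sum>k<n. r2 k * x i k) \<le> c2)) \<and>
      (\<forall>i<m. \<forall>k<3*n. y i k = Qmap n F r1 r2 (x i) k))"

definition has_3n_indep :: "nat \<Rightarrow> nat \<Rightarrow> (nat \<Rightarrow> nat \<Rightarrow> real) \<Rightarrow> bool" where
  "has_3n_indep n m x \<longleftrightarrow> (\<exists>S \<subseteq> {..<m}. card S = 3*n \<and>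
     (\<forall>a :: nat \<Rightarrow> real. (\<forall>k<3*n. (\<Sum>i\<in>S. a i * x i k) = 0) \<longrightarrow> (\<forall>i\<in>S. a i = 0)))"

text \<open>The hypothesis h(x) = sgn(min(c1 - r1^T x, c2 - r2^T x)) of S, with r_j unit in R^{3n}
  (sgn of a nonnegative number is '+').\<close>
definition hyp :: "nat \<Rightarrow> (nat \<Rightarrow> real) \<Rightarrow> (nat \<Rightarrow> real) \<Rightarrow> real \<Rightarrow> real \<Rightarrow> (nat \<Rightarrow> real) \<Rightarrow> bool" where
  "hyp n r1 r2 c1 c2 v \<longleftrightarrow> min (c1 - (\<Sum>k<3*n. r1 k * v k)) (c2 - (\<Sum>k<3*n. r2 k * v k)) \<ge> 0"

text \<open>Input encoding: integer registers 0,1 hold n, m; register 2+i holds the label of point i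
  (1 for '+', 0 for '-'); real registers hold x_i(k) at 3n*i+k and y_i(k) at 3nm+3n*i+k.\<close>
definition init_state :: "nat \<Rightarrow> nat \<Rightarrow> (nat \<Rightarrow> nat \<Rightarrow> real) \<Rightarrow> (nat \<Rightarrow> nat \<Rightarrow> real) \<Rightarrow>
    (nat \<Rightarrow> bool) \<Rightarrow> state" where
  "init_state n m x y z =
    ((\<lambda>j. if j = 0 then int n else if j = 1 then int m
          else if 2 \<le> j \<and> j < m + 2 then (if z (j - 2) then 1 else 0) else 0),
     (\<lambda>j. if j < 3*n*m then x (j div (3*n)) (j mod (3*n))
          else if j < 6*n*m then y ((j - 3*n*m) div (3*n)) ((j - 3*n*m) mod (3*n))
          else 0))"

definition out_r1 :: "nat \<Rightarrow> state \<Rightarrow> nat \<Rightarrow> real" where "out_r1 n s = (\<lambda>k. snd s k)"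
definition out_r2 :: "nat \<Rightarrow> state \<Rightarrow> nat \<Rightarrow> real" where "out_r2 n s = (\<lambda>k. snd s (3*n + k))"
definition out_c1 :: "nat \<Rightarrow> state \<Rightarrow> real" where "out_c1 n s = snd s (6*n)"
definition out_c2 :: "nat \<Rightarrow> state \<Rightarrow> real" where "out_c2 n s = snd s (6*n + 1)"

end

theory Submission
  imports Defs "HOL-Library.Function_Algebras"
begin

text \<open>The learner runs Gauss-Jordan elimination on the m \<times> 6n matrix with rows
  (x_i, y_i). Row operations keep every row of the form (v, Q v), as Q = Q(r1, r2) is linear, and
  keep the x-parts spanning all x_i; since 3n of the x_i are independent, each of the first 3n
  columns has a pivot. Afterwards row n has x-part M_nn e_n, so its y-part is M_nn Q e_n, whose
  coordinates n, ..., 3n - 1 are M_nn (r1, r2) / sqrt 2 by the choice of the first column of F.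
  This recovers r1 and r2 exactly, and c_j can be taken to be the largest r_j^T x_i over the
  positive points. Each of the 3n elimination rounds costs O(mn) steps.\<close>

type_synonym vec = "nat \<Rightarrow> real"
type_synonym mat = "nat \<Rightarrow> vec"

section \<open>Row reduction\<close>

definition fun_scale :: "real \<Rightarrow> vec \<Rightarrow> vec" where
  "fun_scale c f = (\<lambda>k. c * f k)"

interpretation real_fun: vector_space fun_scale
  by unfold_locales (auto simp: fun_scale_def fun_eq_iff algebra_simps)

definition trunc :: "nat \<Rightarrow> vec \<Rightarrow> vec" where
  "trunc N v = (\<lambda>k. if k < N then v k else 0)"

definition basis_vec :: "nat \<Rightarrow> vec" where
  "basis_vec j = (\<lambda>k. if k = j then 1 else 0)"

definition indep_rows :: "nat \<Rightarrow> mat \<Rightarrow> nat set \<Rightarrow> bool" where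
  "indep_rows N x S \<longleftrightarrow>
     (\<forall>a. (\<forall>k<N. (\<Sum>i\<in>S. a i * x i k) = 0) \<longrightarrow> (\<forall>i\<in>S. a i = 0))"

lemma has_3n_indep_iff: "has_3n_indep n m x \<longleftrightarrow> (\<exists>S \<subseteq> {..<m}. card S = 3*n \<and> indep_rows (3*n) x S)"
  by (simp add: has_3n_indep_def indep_rows_def)

lemma sum_fun_apply: "(\<Sum>v\<in>A. f v) k = (\<Sum>v\<in>A. f v k :: 'b :: comm_monoid_add)"
  by (induction A rule: infinite_finite_induct) auto

lemma indep_rows_inj_on:
  assumes indep: "indep_rows N x S" and fin: "finite S"
  shows "inj_on (\<lambda>i. trunc N (x i)) S"
proof (rule inj_onI, rule ccontr)
  fix i i' assume ii: "i \<in> S" "i' \<in> S" "trunc N (x i) = trunc N (x i')" "i \<noteq> i'"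
  define a where "a = (\<lambda>j. if j = i then (1::real) else if j = i' then -1 else 0)"
  have "(\<Sum>j\<in>S. a j * x j k) = 0" if k: "k < N" for k
  proof -
    have "x i k = x i' k" using ii(3) k by (auto simp: trunc_def fun_eq_iff dest: spec[of _ k])
    moreover have "(\<Sum>j\<in>S. a j * x j k) = (\<Sum>j\<in>{i,i'}. a j * x j k)"
      using ii fin by (intro sum.mono_neutral_right) (auto simp: a_def)
    ultimately show ?thesis using ii by (simp add: a_def)
  qed
  with indep ii show False by (auto simp: indep_rows_def a_def dest!: spec[of _ a])
qed

lemma indep_rows_independent:
  assumes indep: "indep_rows N x S" and fin: "finite S"
  shows "real_fun.independent ((\<lambda>i. trunc N (x i)) ` S)"
  unfolding real_fun.independent_explicit_module
proof (intro allI impI)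
  fix t u v
  assume t: "finite t" "t \<subseteq> (\<lambda>i. trunc N (x i)) ` S" "(\<Sum>v\<in>t. fun_scale (u v) v) = 0" "v \<in> t"
  define a where "a = (\<lambda>j. if j \<in> S \<and> trunc N (x j) \<in> t then u (trunc N (x j)) else 0)"
  have "(\<Sum>j\<in>S. a j * x j k) = 0" if k: "k < N" for k
  proof -
    have "(\<Sum>j\<in>S. a j * x j k) = (\<Sum>j\<in>{j\<in>S. trunc N (x j) \<in> t}. u (trunc N (x j)) * trunc N (x j) k)"
      using fin k by (intro sum.mono_neutral_cong_right) (auto simp: a_def trunc_def)
    also have "\<dots> = (\<Sum>w\<in>(\<lambda>i. trunc N (x i)) ` {j\<in>S. trunc N (x j) \<in> t}. u w * w k)"
      using indep_rows_inj_on[OF indep fin] by (subst sum.reindex) (auto intro: inj_on_subset)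
    also have "(\<lambda>i. trunc N (x i)) ` {j\<in>S. trunc N (x j) \<in> t} = t" using t(2) by auto
    also have "(\<Sum>w\<in>t. u w * w k) = (\<Sum>w\<in>t. fun_scale (u w) w) k"
      by (simp add: sum_fun_apply fun_scale_def)
    finally show ?thesis using t(3) by simp
  qed
  with indep have "\<forall>j\<in>S. a j = 0" by (simp add: indep_rows_def)
  moreover obtain j where "j \<in> S" "v = trunc N (x j)" using t by auto
  ultimately show "u v = 0" using t by (auto simp: a_def)
qed

lemma trunc_in_span_basis:
  assumes "\<forall>k\<le>c. v k = 0"
  shows "trunc N v \<in> real_fun.span (basis_vec ` {c<..<N})"
proof -
  have eq: "trunc N v = (\<Sum>k\<in>{c<..<N}. fun_scale (v k) (basis_vec k))"
    using assms by (auto simp: fun_eq_iff trunc_def sum_fun_apply fun_scale_def basis_vec_def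
        if_distrib[of "\<lambda>b. _ * b"] sum.delta cong: if_cong)
  show ?thesis
    unfolding eq by (intro real_fun.span_sum real_fun.span_scale real_fun.span_base) auto
qed

definition swap_rows :: "(nat \<Rightarrow> 'a) \<Rightarrow> nat \<Rightarrow> nat \<Rightarrow> nat \<Rightarrow> 'a" where
  "swap_rows M a b = (\<lambda>j. if j = a then M b else if j = b then M a else M j)"

definition clear_column :: "mat \<Rightarrow> nat \<Rightarrow> mat" where
  "clear_column M c = (\<lambda>j. if j = c then M c else (\<lambda>k. M j k - (M j c / M c c) * M c k))"

definition graph_rows :: "nat \<Rightarrow> nat \<Rightarrow> (vec \<Rightarrow> vec) \<Rightarrow> mat \<Rightarrow> bool" where
  "graph_rows N m Q M \<longleftrightarrow> (\<forall>j<m. \<forall>k<N. M j (N + k) = Q (M j) k)"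

definition spans_rows :: "nat \<Rightarrow> nat \<Rightarrow> mat \<Rightarrow> mat \<Rightarrow> bool" where
  "spans_rows N m x M \<longleftrightarrow> (\<forall>i<m. trunc N (x i) \<in> real_fun.span ((\<lambda>j. trunc N (M j)) ` {..<m}))"

definition reduced_upto :: "nat \<Rightarrow> nat \<Rightarrow> mat \<Rightarrow> bool" where
  "reduced_upto m c M \<longleftrightarrow> (\<forall>j<c. M j j \<noteq> 0 \<and> (\<forall>k<c. k \<noteq> j \<longrightarrow> M j k = 0)) \<and>
     (\<forall>j. c \<le> j \<and> j < m \<longrightarrow> (\<forall>k<c. M j k = 0))"

definition gj_invariant :: "nat \<Rightarrow> nat \<Rightarrow> (vec \<Rightarrow> vec) \<Rightarrow> mat \<Rightarrow> nat \<Rightarrow> mat \<Rightarrow> bool" where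
  "gj_invariant N m Q x c M \<longleftrightarrow> graph_rows N m Q M \<and> spans_rows N m x M \<and> reduced_upto m c M"

definition row_linear :: "nat \<Rightarrow> (vec \<Rightarrow> vec) \<Rightarrow> bool" where
  "row_linear N Q \<longleftrightarrow> (\<forall>a b f k. k < N \<longrightarrow> Q (\<lambda>i. a i - f * b i) k = Q a k - f * Q b k)"

definition prefix_determined :: "nat \<Rightarrow> (vec \<Rightarrow> vec) \<Rightarrow> bool" where
  "prefix_determined N Q \<longleftrightarrow> (\<forall>a b k. (\<forall>i<N. a i = b i) \<longrightarrow> Q a k = Q b k)"

lemma pivot_exists:
  assumes S: "S \<subseteq> {..<m}" "card S = N" and indep: "indep_rows N x S"
    and span: "spans_rows N m x M" and red: "reduced_upto m c M" and c: "c < N"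
  shows "\<exists>p. c \<le> p \<and> p < m \<and> M p c \<noteq> 0"
proof (rule ccontr)
  assume "\<not> ?thesis"
  with red have zero: "\<forall>k\<le>c. M j k = 0" if "c \<le> j" "j < m" for j
    using that unfolding reduced_upto_def by (metis le_neq_implies_less)
  \<comment> \<open>Then all rows lie in the span of fewer than N vectors, which cannot contain N independent ones.\<close>
  define T where "T = (\<lambda>j. trunc N (M j)) ` {..<c} \<union> basis_vec ` {c<..<N}"
  have "card T \<le> card ((\<lambda>j. trunc N (M j)) ` {..<c}) + card (basis_vec ` {c<..<N})"
    unfolding T_def by (rule card_Un_le)
  also have "\<dots> \<le> c + (N - Suc c)"
    by (intro add_mono card_image_le[THEN order_trans]) auto
  finally have card_T: "card T < N" using c by linarith
  have "trunc N (M j) \<in> real_fun.span T" if "j < m" for j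
  proof (cases "j < c")
    case True
    then show ?thesis by (intro real_fun.span_base) (auto simp: T_def)
  next
    case False
    then have "trunc N (M j) \<in> real_fun.span (basis_vec ` {c<..<N})"
      using zero that by (intro trunc_in_span_basis) simp
    then show ?thesis by (rule real_fun.span_mono[THEN subsetD, rotated]) (auto simp: T_def)
  qed
  then have "real_fun.span ((\<lambda>j. trunc N (M j)) ` {..<m}) \<subseteq> real_fun.span T"
    by (intro real_fun.span_minimal) (auto simp: real_fun.subspace_span)
  with span S(1) have "(\<lambda>i. trunc N (x i)) ` S \<subseteq> real_fun.span T"
    unfolding spans_rows_def by auto
  moreover have fin: "finite S" using S(1) finite_subset by blast
  ultimately have "card ((\<lambda>i. trunc N (x i)) ` S) \<le> card T"
    using real_fun.independent_span_bound indep_rows_independent[OF indep] by (simp add: T_def)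
  moreover have "card ((\<lambda>i. trunc N (x i)) ` S) = N"
    using indep_rows_inj_on[OF indep fin] S by (simp add: card_image)
  ultimately show False using card_T by simp
qed

lemma graph_rows_swap: "graph_rows N m Q M \<Longrightarrow> a < m \<Longrightarrow> b < m \<Longrightarrow> graph_rows N m Q (swap_rows M a b)"
  by (auto simp: graph_rows_def swap_rows_def)

lemma spans_rows_swap:
  assumes "spans_rows N m x M" "a < m" "b < m"
  shows "spans_rows N m x (swap_rows M a b)"
proof -
  have "(\<lambda>j. trunc N (swap_rows M a b j)) ` {..<m} = (\<lambda>j. trunc N (M j)) ` {..<m}"
    using assms(2,3) unfolding swap_rows_def by (auto simp: image_iff) (metis lessThan_iff)+
  with assms(1) show ?thesis by (simp add: spans_rows_def)
qed

lemma reduced_upto_swap: "reduced_upto m c M \<Longrightarrow> c \<le> p \<Longrightarrow> p < m \<Longrightarrow> reduced_upto m c (swap_rows M c p)"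
  by (auto simp: reduced_upto_def swap_rows_def)

lemma graph_rows_clear:
  assumes "graph_rows N m Q M" "row_linear N Q" "c < m"
  shows "graph_rows N m Q (clear_column M c)"
proof -
  have "Q (\<lambda>i. M j i - (M j c / M c c) * M c i) k = Q (M j) k - (M j c / M c c) * Q (M c) k"
    if "k < N" for j k
    using assms(2) that unfolding row_linear_def by blast
  then show ?thesis using assms(1,3) unfolding graph_rows_def clear_column_def by auto
qed

lemma spans_rows_clear:
  assumes "spans_rows N m x M" "c < m"
  shows "spans_rows N m x (clear_column M c)"
proof -
  have "trunc N (M j) \<in> real_fun.span ((\<lambda>j. trunc N (clear_column M c j)) ` {..<m})" if j: "j < m" for j
  proof (cases "j = c")
    case True
    then show ?thesis using j by (intro real_fun.span_base) (auto simp: clear_column_def)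
  next
    case False
    \<comment> \<open>the elimination step is undone by adding back a multiple of the pivot row\<close>
    have eq: "trunc N (M j) = trunc N (clear_column M c j) + fun_scale (M j c / M c c) (trunc N (clear_column M c c))"
      using False by (auto simp: clear_column_def fun_eq_iff trunc_def fun_scale_def)
    show ?thesis unfolding eq using j assms(2)
      by (intro real_fun.span_add real_fun.span_scale real_fun.span_base) auto
  qed
  then have "real_fun.span ((\<lambda>j. trunc N (M j)) ` {..<m}) \<subseteq>
      real_fun.span ((\<lambda>j. trunc N (clear_column M c j)) ` {..<m})"
    by (intro real_fun.span_minimal) (auto simp: real_fun.subspace_span)
  with assms(1) show ?thesis by (auto simp: spans_rows_def)
qed

lemma reduced_upto_clear:
  assumes "reduced_upto m c M" "c < m" "M c c \<noteq> 0"
  shows "reduced_upto m (Suc c) (clear_column M c)"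
  using assms unfolding reduced_upto_def clear_column_def by (auto simp: less_Suc_eq)

lemma gj_invariant_step:
  assumes "gj_invariant N m Q x c M" "row_linear N Q" "c \<le> p" "p < m" "M p c \<noteq> 0"
  shows "gj_invariant N m Q x (Suc c) (clear_column (swap_rows M c p) c)"
proof -
  have "swap_rows M c p c c \<noteq> 0" using assms by (simp add: swap_rows_def)
  then show ?thesis using assms unfolding gj_invariant_def
    by (meson graph_rows_swap graph_rows_clear spans_rows_swap spans_rows_clear
        reduced_upto_swap reduced_upto_clear le_less_trans)
qed

lemma gj_invariant_cong:
  assumes eq: "\<And>j k. j < m \<Longrightarrow> k < 2*N \<Longrightarrow> M j k = M' j k"
    and Q: "prefix_determined N Q" and c: "c \<le> N" "N \<le> m"
    and inv: "gj_invariant N m Q x c M"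
  shows "gj_invariant N m Q x c M'"
proof -
  have "Q (M j) k = Q (M' j) k" if "j < m" for j k
    using Q eq that unfolding prefix_determined_def by auto
  then have "graph_rows N m Q M'" using inv eq unfolding gj_invariant_def graph_rows_def by auto
  moreover have "(\<lambda>j. trunc N (M j)) ` {..<m} = (\<lambda>j. trunc N (M' j)) ` {..<m}"
    using eq by (intro image_cong) (auto simp: trunc_def fun_eq_iff)
  then have "spans_rows N m x M'" using inv by (simp add: gj_invariant_def spans_rows_def)
  moreover have "M' j k = M j k" if "j < m" "k < c" for j k using eq[of j k] that c by simp
  then have "reduced_upto m c M'"
    using inv c unfolding gj_invariant_def reduced_upto_def by auto
  ultimately show ?thesis by (simp add: gj_invariant_def)
qed

lemma Qmap_row_linear: "row_linear (3*n) (Qmap n F r1 r2)"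
  unfolding row_linear_def Qmap_def
  by (auto simp: sum_subtractf sum_distrib_left algebra_simps)

lemma Qmap_prefix_determined: "prefix_determined (3*n) (Qmap n F r1 r2)"
  unfolding prefix_determined_def Qmap_def by (auto intro!: sum.cong)

section \<open>Total correctness with step bounds\<close>

definition wp :: "com \<Rightarrow> state \<Rightarrow> (nat \<Rightarrow> state \<Rightarrow> bool) \<Rightarrow> bool" where
  "wp c s Q \<longleftrightarrow> (\<exists>t s'. exec c s t s' \<and> Q t s')"

inductive_cases SkipE: "exec Skip s t s'"
inductive_cases IStoreE: "exec (IStore a e) s t s'"
inductive_cases RStoreE: "exec (RStore a e) s t s'"
inductive_cases SeqE: "exec (Seq c1 c2) s t s'"
inductive_cases IfE: "exec (If b c1 c2) s t s'"

lemma wp_Skip[simp]: "wp Skip s Q \<longleftrightarrow> Q 1 s"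
  unfolding wp_def by (metis SkipE exec_Skip)

lemma wp_IStore[simp]: "wp (IStore a e) s Q \<longleftrightarrow> Q 1 ((fst s)(nat (ieval a s) := ieval e s), snd s)"
  unfolding wp_def by (metis IStoreE exec_IStore)

lemma wp_RStore[simp]: "wp (RStore a e) s Q \<longleftrightarrow> Q 1 (fst s, (snd s)(nat (ieval a s) := reval e s))"
  unfolding wp_def by (metis RStoreE exec_RStore)

lemma wp_Seq[simp]: "wp (Seq c1 c2) s Q \<longleftrightarrow> wp c1 s (\<lambda>t1 s1. wp c2 s1 (\<lambda>t2 s2. Q (t1 + t2) s2))"
  unfolding wp_def by (metis SeqE exec_Seq)

lemma wp_If[simp]: "wp (If b c1 c2) s Q \<longleftrightarrow>
   (if beval b s then wp c1 s (\<lambda>t. Q (Suc t)) else wp c2 s (\<lambda>t. Q (Suc t)))"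
  unfolding wp_def by (metis IfE exec_IfT exec_IfF)

lemma wp_mono: "wp c s Q \<Longrightarrow> (\<And>t s'. Q t s' \<Longrightarrow> Q' t s') \<Longrightarrow> wp c s Q'"
  unfolding wp_def by blast

lemma wp_seqI: "wp c1 s Q1 \<Longrightarrow> (\<And>t1 s1. Q1 t1 s1 \<Longrightarrow> wp c2 s1 (\<lambda>t2 s2. Q (t1 + t2) s2)) \<Longrightarrow>
   wp (Seq c1 c2) s Q"
  unfolding wp_def by (meson exec_Seq)

lemma wp_while:
  assumes step: "\<And>j s. I (Suc j) s \<Longrightarrow> beval b s \<and> wp c s (\<lambda>t s'. t \<le> T \<and> I j s')"
    and stop: "\<And>s. I 0 s \<Longrightarrow> \<not> beval b s"
  shows "I j s \<Longrightarrow> wp (While b c) s (\<lambda>t s'. t \<le> (T + 1) * j + 1 \<and> I 0 s')"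
proof (induction j arbitrary: s)
  case 0
  then have "exec (While b c) s 1 s" using stop by (intro exec_WhileF)
  then show ?case using 0 unfolding wp_def by (intro exI[of _ 1] exI[of _ s]) simp
next
  case (Suc j)
  from step[OF Suc.prems] obtain t1 s1 where b: "beval b s" and e1: "exec c s t1 s1" "t1 \<le> T" "I j s1"
    by (auto simp: wp_def)
  from Suc.IH[OF e1(3)] obtain t2 s2 where e2: "exec (While b c) s1 t2 s2" "t2 \<le> (T + 1) * j + 1" "I 0 s2"
    by (auto simp: wp_def)
  have "exec (While b c) s (Suc (t1 + t2)) s2" using b e1 e2 by (intro exec_WhileT)
  moreover have "Suc (t1 + t2) \<le> (T + 1) * Suc j + 1" using e1(2) e2(2) by simp
  ultimately show ?case using e2(3) unfolding wp_def by (intro exI[of _ "Suc (t1 + t2)"] exI[of _ s2]) simp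
qed

lemma wp_for:
  assumes step: "\<And>i s. lo \<le> i \<Longrightarrow> i < hi \<Longrightarrow> P i s \<Longrightarrow> beval b s \<and> wp c s (\<lambda>t s'. t \<le> T \<and> P (Suc i) s')"
    and stop: "\<And>s. P hi s \<Longrightarrow> \<not> beval b s"
    and start: "P lo s" and le: "lo \<le> hi"
  shows "wp (While b c) s (\<lambda>t s'. t \<le> (T + 1) * (hi - lo) + 1 \<and> P hi s')"
proof -
  define I where "I = (\<lambda>j s. j \<le> hi - lo \<and> P (hi - j) s)"
  have "wp (While b c) s (\<lambda>t s'. t \<le> (T + 1) * (hi - lo) + 1 \<and> I 0 s')"
  proof (rule wp_while)
    fix j s assume "I (Suc j) s"
    then have h: "Suc j \<le> hi - lo" "P (hi - Suc j) s" by (auto simp: I_def)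
    have eq: "Suc (hi - Suc j) = hi - j" using h(1) by simp
    from step[of "hi - Suc j" s] h show "beval b s \<and> wp c s (\<lambda>t s'. t \<le> T \<and> I j s')"
      unfolding eq I_def by (auto elim: wp_mono)
  next
    fix s assume "I 0 s" then show "\<not> beval b s" using stop by (auto simp: I_def)
  next
    show "I (hi - lo) s" using start le by (auto simp: I_def)
  qed
  then show ?thesis by (rule wp_mono) (auto simp: I_def)
qed

lemma wp_Seq_bounded:
  assumes "wp c1 s (\<lambda>t s'. t \<le> B1 \<and> P1 s')" "\<And>s'. P1 s' \<Longrightarrow> wp c2 s' (\<lambda>t s''. t \<le> B2 \<and> P2 s'')"
  shows "wp (Seq c1 c2) s (\<lambda>t s''. t \<le> B1 + B2 \<and> P2 s'')"
  using assms unfolding wp_def by (fastforce intro: exec_Seq)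

section \<open>The learning program\<close>

text \<open>Integer register m + 2 + v holds loop counter v. The real registers hold, in this order,
  the x block and the y block of the input, the m \<times> 6n work matrix (row j at 6nm + 6nj),
  eight scratch cells at 12nm, and the result vector at 12nm + 8, whose first 3n entries are
  the first normal and whose next 3n entries are the second one. The scratch cells hold:
  0 the swap buffer, 1 the elimination factor, 2 and 3 the two dot products, 4 the bound B,
  5 and 6 the two thresholds.\<close>

definition n_exp :: iexp where "n_exp = ILoad (IConst 0)"
definition m_exp :: iexp where "m_exp = ILoad (IConst 1)"
definition three_n_exp :: iexp where "three_n_exp = IMul (IConst 3) n_exp"
definition six_n_exp :: iexp where "six_n_exp = IMul (IConst 6) n_exp"

definition ctr_addr :: "nat \<Rightarrow> iexp" where "ctr_addr v = IAdd m_exp (IConst (int v + 2))"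
definition ctr :: "nat \<Rightarrow> iexp" where "ctr v = ILoad (ctr_addr v)"
definition set_ctr :: "nat \<Rightarrow> iexp \<Rightarrow> com" where "set_ctr v e = IStore (ctr_addr v) e"
definition inc_ctr :: "nat \<Rightarrow> com" where "inc_ctr v = set_ctr v (IAdd (ctr v) (IConst 1))"
definition less_exp :: "iexp \<Rightarrow> iexp \<Rightarrow> bexp" where "less_exp a b = ILe (IAdd a (IConst 1)) b"
definition label_exp :: "iexp \<Rightarrow> iexp" where "label_exp i = ILoad (IAdd i (IConst 2))"

definition x_addr :: "iexp \<Rightarrow> iexp \<Rightarrow> iexp" where
  "x_addr i k = IAdd (IMul three_n_exp i) k"
definition y_addr :: "iexp \<Rightarrow> iexp \<Rightarrow> iexp" where
  "y_addr i k = IAdd (IMul three_n_exp m_exp) (IAdd (IMul three_n_exp i) k)"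
definition work_addr :: "iexp \<Rightarrow> iexp \<Rightarrow> iexp" where
  "work_addr j k = IAdd (IMul six_n_exp m_exp) (IAdd (IMul six_n_exp j) k)"
definition scratch_addr :: "nat \<Rightarrow> iexp" where
  "scratch_addr t = IAdd (IMul (IConst 12) (IMul n_exp m_exp)) (IConst (int t))"
definition result_addr :: "iexp \<Rightarrow> iexp" where
  "result_addr k = IAdd (IMul (IConst 12) (IMul n_exp m_exp)) (IAdd (IConst 8) k)"

definition for_ctr :: "nat \<Rightarrow> iexp \<Rightarrow> iexp \<Rightarrow> com \<Rightarrow> com" where
  "for_ctr v lo hi body = Seq (set_ctr v lo) (While (less_exp (ctr v) hi) (Seq body (inc_ctr v)))"

definition copy_row :: com where
  "copy_row = for_ctr 2 (IConst 0) three_n_exp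
     (Seq (RStore (work_addr (ctr 1) (ctr 2)) (RLoad (x_addr (ctr 1) (ctr 2))))
          (RStore (work_addr (ctr 1) (IAdd three_n_exp (ctr 2))) (RLoad (y_addr (ctr 1) (ctr 2)))))"

definition copy_input :: com where
  "copy_input = for_ctr 1 (IConst 0) m_exp copy_row"

definition is_zero :: "iexp \<Rightarrow> bexp" where
  "is_zero a = BAnd (RLe (RLoad a) (RConst 0)) (RLe (RConst 0) (RLoad a))"

definition find_pivot :: com where
  "find_pivot = Seq (set_ctr 1 (ctr 0))
     (While (BAnd (less_exp (ctr 1) m_exp) (is_zero (work_addr (ctr 1) (ctr 0)))) (inc_ctr 1))"

definition swap_pivot :: com where
  "swap_pivot = for_ctr 2 (IConst 0) six_n_exp
     (Seq (RStore (scratch_addr 0) (RLoad (work_addr (ctr 0) (ctr 2))))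
     (Seq (RStore (work_addr (ctr 0) (ctr 2)) (RLoad (work_addr (ctr 1) (ctr 2))))
          (RStore (work_addr (ctr 1) (ctr 2)) (RLoad (scratch_addr 0)))))"

definition subtract_pivot_row :: com where
  "subtract_pivot_row = for_ctr 2 (IConst 0) six_n_exp
     (RStore (work_addr (ctr 1) (ctr 2))
       (RSub (RLoad (work_addr (ctr 1) (ctr 2))) (RMul (RLoad (scratch_addr 1)) (RLoad (work_addr (ctr 0) (ctr 2))))))"

definition eliminate_row :: com where
  "eliminate_row = Seq
     (RStore (scratch_addr 1) (RDiv (RLoad (work_addr (ctr 1) (ctr 0))) (RLoad (work_addr (ctr 0) (ctr 0)))))
     subtract_pivot_row"

definition eliminate_other_row :: com where
  "eliminate_other_row = If (BNot (BAnd (ILe (ctr 1) (ctr 0)) (ILe (ctr 0) (ctr 1)))) eliminate_row Skip"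

definition eliminate_column :: com where
  "eliminate_column = for_ctr 1 (IConst 0) m_exp eliminate_other_row"

definition gauss_jordan :: com where
  "gauss_jordan = for_ctr 0 (IConst 0) three_n_exp (Seq find_pivot (Seq swap_pivot eliminate_column))"

definition sqrt2_exp :: rexp where "sqrt2_exp = RSqrt (RConst 2)"

definition read_normals :: com where
  "read_normals = for_ctr 2 (IConst 0) n_exp
     (Seq (RStore (result_addr (ctr 2))
            (RDiv (RMul sqrt2_exp (RLoad (work_addr n_exp (IAdd (IMul (IConst 4) n_exp) (ctr 2)))))
                  (RLoad (work_addr n_exp n_exp))))
          (RStore (result_addr (IAdd three_n_exp (ctr 2)))
            (RDiv (RMul sqrt2_exp (RLoad (work_addr n_exp (IAdd (IMul (IConst 5) n_exp) (ctr 2)))))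
                  (RLoad (work_addr n_exp n_exp)))))"

definition dot_loop :: com where
  "dot_loop = for_ctr 2 (IConst 0) three_n_exp
     (Seq (RStore (scratch_addr 2) (RAdd (RLoad (scratch_addr 2))
            (RMul (RLoad (result_addr (ctr 2))) (RLoad (x_addr (ctr 1) (ctr 2))))))
          (RStore (scratch_addr 3) (RAdd (RLoad (scratch_addr 3))
            (RMul (RLoad (result_addr (IAdd three_n_exp (ctr 2)))) (RLoad (x_addr (ctr 1) (ctr 2)))))))"

definition dot_products :: com where
  "dot_products = Seq (RStore (scratch_addr 2) (RConst 0)) (Seq (RStore (scratch_addr 3) (RConst 0)) dot_loop)"

definition abs_exp :: "rexp \<Rightarrow> rexp" where "abs_exp e = RSqrt (RMul e e)"

definition bound_loop :: com where
  "bound_loop = for_ctr 1 (IConst 0) m_exp (Seq dot_products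
     (RStore (scratch_addr 4) (RAdd (RAdd (RLoad (scratch_addr 4)) (abs_exp (RLoad (scratch_addr 2))))
        (abs_exp (RLoad (scratch_addr 3))))))"

definition bound_pass :: com where
  "bound_pass = Seq (RStore (scratch_addr 4) (RConst 1)) bound_loop"

definition raise_threshold :: "nat \<Rightarrow> nat \<Rightarrow> com" where
  "raise_threshold t d = If (RLe (RLoad (scratch_addr t)) (RLoad (scratch_addr d)))
     (RStore (scratch_addr t) (RLoad (scratch_addr d))) Skip"

definition threshold_loop :: com where
  "threshold_loop = for_ctr 1 (IConst 0) m_exp (Seq dot_products
     (If (ILe (IConst 1) (label_exp (ctr 1))) (Seq (raise_threshold 5 2) (raise_threshold 6 3)) Skip))"

definition threshold_pass :: com where
  "threshold_pass = Seq (RStore (scratch_addr 5) (RSub (RConst 0) (RLoad (scratch_addr 4))))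
     (Seq (RStore (scratch_addr 6) (RSub (RConst 0) (RLoad (scratch_addr 4)))) threshold_loop)"

definition copy_result :: com where
  "copy_result = for_ctr 2 (IConst 0) six_n_exp (RStore (ctr 2) (RLoad (result_addr (ctr 2))))"

definition write_output :: com where
  "write_output = Seq copy_result (Seq (RStore six_n_exp (RLoad (scratch_addr 5)))
     (RStore (IAdd six_n_exp (IConst 1)) (RLoad (scratch_addr 6))))"

definition learner :: com where
  "learner = Seq copy_input (Seq gauss_jordan (Seq read_normals
     (Seq bound_pass (Seq threshold_pass write_output))))"

definition learner_time :: "nat \<Rightarrow> nat \<Rightarrow> nat" where
  "learner_time n m = (12*n + 4) * m + 2 + ((2*m + 2 + (30*n + 2 + ((18*n + 6) * m + 2)) + 2) * (3*n) + 2 +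
     (4*n + 2 + ((12*n + 7) * m + 3 + ((12*n + 11) * m + 4 + (18*n + 4)))))"

lemma learner_time_bound:
  assumes "0 < n" "3*n \<le> m"
  shows "learner_time n m \<le> 400 * m * n\<^sup>2"
proof -
  define q where "q = m * (n * n)"
  have "m \<le> q" "n * m \<le> q" "n * n \<le> q" "n \<le> q" "1 \<le> q"
    using assms unfolding q_def by (simp_all add: le_trans[OF _ mult_le_mono1])
  moreover have "learner_time n m = 60 * (n*m) + 22 * m + 90 * (n*n) + 54 * q + 46 * n + 17"
    unfolding learner_time_def q_def by (simp add: algebra_simps)
  ultimately have "learner_time n m \<le> 400 * q" by linarith
  then show ?thesis unfolding q_def by (simp add: power2_eq_square mult.assoc)
qed

lemma wp_for_ctr:
  assumes init: "P lo ((fst s)(nat (ieval (ctr_addr v) s) := ieval loE s), snd s)"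
    and step: "\<And>i s. lo \<le> i \<Longrightarrow> i < hi \<Longrightarrow> P i s \<Longrightarrow>
       beval (less_exp (ctr v) hiE) s \<and> wp (Seq body (inc_ctr v)) s (\<lambda>t s'. t \<le> T \<and> P (Suc i) s')"
    and stop: "\<And>s. P hi s \<Longrightarrow> \<not> beval (less_exp (ctr v) hiE) s"
    and le: "lo \<le> hi"
    and bd: "(T + 1) * (hi - lo) + 2 \<le> B"
  shows "wp (for_ctr v loE hiE body) s (\<lambda>t s'. t \<le> B \<and> P hi s')"
proof -
  have "wp (While (less_exp (ctr v) hiE) (Seq body (inc_ctr v)))
      ((fst s)(nat (ieval (ctr_addr v) s) := ieval loE s), snd s) (\<lambda>t s'. t \<le> (T + 1) * (hi - lo) + 1 \<and> P hi s')"
    by (rule wp_for[OF step stop init le])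
  then show ?thesis unfolding for_ctr_def set_ctr_def using bd by simp (erule wp_mono; simp)
qed

section \<open>Memory layout\<close>

lemma row_major_div_mod:
  assumes "k < (d::nat)"
  shows "(d * j + k) div d = j" "(d * j + k) mod d = k"
  using assms by (simp_all add: add.commute[of "d * j"] mult.commute[of d])

lemma row_major_less:
  assumes "j < m" "k < (d::nat)"
  shows "d * j + k < d * m"
proof -
  have "d * j + k < d * Suc j" using assms(2) by simp
  also have "\<dots> \<le> d * m" using assms(1) by (intro mult_le_mono2) simp
  finally show ?thesis .
qed

lemma nat_of_int_linear [simp]:
  "nat (numeral c * int a) = numeral c * a"
  "nat (numeral c * int a + 1) = numeral c * a + 1"
  "nat (numeral c * int a + int b) = numeral c * a + b"
  "nat (numeral c * int a + (numeral d * int b + int e)) = numeral c * a + (numeral d * b + e)"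
  by (simp_all add: nat_add_distrib nat_mult_distrib)

locale layout =
  fixes n m :: nat and x y :: mat and z :: "nat \<Rightarrow> bool"
  assumes n_pos: "0 < n" and m_ge: "3 * n \<le> m"
begin

lemma n_less_m: "n < m" using n_pos m_ge by simp

definition int_regs :: "(nat \<Rightarrow> int) \<Rightarrow> nat \<Rightarrow> int" where
  "int_regs cnt a = (if a = 0 then int n else if a = 1 then int m
     else if 2 \<le> a \<and> a < m + 2 then (if z (a - 2) then 1 else 0) else cnt (a - (m + 2)))"

definition input_regs :: "mat \<Rightarrow> vec" where
  "input_regs M a = (if a < 3*(n*m) then x (a div (3*n)) (a mod (3*n))
     else if a < 6*(n*m) then y ((a - 3*(n*m)) div (3*n)) ((a - 3*(n*m)) mod (3*n))
     else M ((a - 6*(n*m)) div (6*n)) ((a - 6*(n*m)) mod (6*n)))"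

definition real_regs :: "mat \<Rightarrow> vec \<Rightarrow> vec \<Rightarrow> vec" where
  "real_regs M sc R = (\<lambda>a. if a < 12*(n*m) then input_regs M a
     else if a < 12*(n*m) + 8 then sc (a - 12*(n*m)) else R (a - (12*(n*m) + 8)))"

definition ctr_loc :: "nat \<Rightarrow> nat" where "ctr_loc v = m + 2 + v"
definition x_loc :: "nat \<Rightarrow> nat \<Rightarrow> nat" where "x_loc i k = 3*n*i + k"
definition y_loc :: "nat \<Rightarrow> nat \<Rightarrow> nat" where "y_loc i k = 3*(n*m) + 3*n*i + k"
definition work_loc :: "nat \<Rightarrow> nat \<Rightarrow> nat" where "work_loc j k = 6*(n*m) + 6*n*j + k"
definition scratch_loc :: "nat \<Rightarrow> nat" where "scratch_loc t = 12*(n*m) + t"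
definition result_loc :: "nat \<Rightarrow> nat" where "result_loc k = 12*(n*m) + 8 + k"

lemma int_regs_0 [simp]: "int_regs cnt 0 = int n"
  and int_regs_1 [simp]: "int_regs cnt (Suc 0) = int m"
  and int_regs_ctr [simp]: "int_regs cnt (ctr_loc v) = cnt v"
  by (auto simp: int_regs_def ctr_loc_def)

lemma int_regs_upd [simp]: "(int_regs cnt)(ctr_loc v := w) = int_regs (cnt(v := w))"
  by (rule ext) (auto simp: int_regs_def ctr_loc_def)

lemma ieval_n_exp [simp]: "ieval n_exp (int_regs cnt, r) = int n"
  and ieval_m_exp [simp]: "ieval m_exp (int_regs cnt, r) = int m"
  and ieval_three_n_exp [simp]: "ieval three_n_exp (int_regs cnt, r) = int (3*n)"
  and ieval_six_n_exp [simp]: "ieval six_n_exp (int_regs cnt, r) = int (6*n)"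
  and ieval_ctr_addr [simp]: "ieval (ctr_addr v) (int_regs cnt, r) = int (ctr_loc v)"
  and ieval_scratch_addr [simp]: "ieval (scratch_addr t) (int_regs cnt, r) = int (scratch_loc t)"
  by (simp_all add: n_exp_def m_exp_def three_n_exp_def six_n_exp_def ctr_addr_def ctr_loc_def
      ctr_def scratch_addr_def scratch_loc_def)

lemma ieval_ctr [simp]: "ieval (ctr v) (int_regs cnt, r) = cnt v"
  by (simp add: ctr_def)

lemma ieval_label_exp [simp]:
  "ieval e (int_regs cnt, r) = int i \<Longrightarrow> i < m \<Longrightarrow> ieval (label_exp e) (int_regs cnt, r) = (if z i then 1 else 0)"
  by (simp add: label_exp_def int_regs_def nat_add_distrib)

lemma ieval_x_addr [simp]: "0 \<le> ieval i (int_regs cnt, r) \<Longrightarrow> 0 \<le> ieval k (int_regs cnt, r) \<Longrightarrow>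
    ieval (x_addr i k) (int_regs cnt, r) = int (x_loc (nat (ieval i (int_regs cnt, r))) (nat (ieval k (int_regs cnt, r))))"
  and ieval_y_addr [simp]: "0 \<le> ieval i (int_regs cnt, r) \<Longrightarrow> 0 \<le> ieval k (int_regs cnt, r) \<Longrightarrow>
    ieval (y_addr i k) (int_regs cnt, r) = int (y_loc (nat (ieval i (int_regs cnt, r))) (nat (ieval k (int_regs cnt, r))))"
  and ieval_work_addr [simp]: "0 \<le> ieval i (int_regs cnt, r) \<Longrightarrow> 0 \<le> ieval k (int_regs cnt, r) \<Longrightarrow>
    ieval (work_addr i k) (int_regs cnt, r) = int (work_loc (nat (ieval i (int_regs cnt, r))) (nat (ieval k (int_regs cnt, r))))"
  and ieval_result_addr [simp]: "0 \<le> ieval k (int_regs cnt, r) \<Longrightarrow>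
    ieval (result_addr k) (int_regs cnt, r) = int (result_loc (nat (ieval k (int_regs cnt, r))))"
  by (simp_all add: x_addr_def x_loc_def y_addr_def y_loc_def work_addr_def work_loc_def
      result_addr_def result_loc_def three_n_exp_def six_n_exp_def)

lemma work_loc_bound: "j < m \<Longrightarrow> k < 6*n \<Longrightarrow> 6*n*j + k < 6*(n*m)"
  using row_major_less[of j m k "6*n"] by (simp add: mult.assoc)

lemma real_regs_x [simp]:
  assumes "j < m" "k < 3*n"
  shows "real_regs M sc R (x_loc j k) = x j k"
proof -
  have "x_loc j k < 3*(n*m)"
    using row_major_less[OF assms] by (simp add: x_loc_def mult.assoc)
  then show ?thesis using row_major_div_mod[OF assms(2)]
    by (simp add: real_regs_def input_regs_def x_loc_def)
qed

lemma real_regs_y [simp]: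
  assumes "j < m" "k < 3*n"
  shows "real_regs M sc R (y_loc j k) = y j k"
proof -
  have "3*n*j + k < 3*(n*m)" using row_major_less[OF assms] by (simp add: mult.assoc)
  then have "\<not> y_loc j k < 3*(n*m)" "y_loc j k < 6*(n*m)" "y_loc j k < 12*(n*m)"
      "y_loc j k - 3*(n*m) = 3*n*j + k"
    unfolding y_loc_def by linarith+
  then show ?thesis by (simp add: real_regs_def input_regs_def row_major_div_mod assms)
qed

lemma real_regs_work [simp]:
  assumes "j < m" "k < 6*n"
  shows "real_regs M sc R (work_loc j k) = M j k"
proof -
  have "\<not> work_loc j k < 3*(n*m)" "\<not> work_loc j k < 6*(n*m)" "work_loc j k < 12*(n*m)"
      "work_loc j k - 6*(n*m) = 6*n*j + k"
    unfolding work_loc_def using work_loc_bound[OF assms] by linarith+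
  then show ?thesis by (simp add: real_regs_def input_regs_def row_major_div_mod assms)
qed

lemma real_regs_scratch [simp]: "t < 8 \<Longrightarrow> real_regs M sc R (scratch_loc t) = sc t"
  by (simp add: real_regs_def scratch_loc_def)

lemma real_regs_result [simp]: "real_regs M sc R (result_loc k) = R k"
  by (simp add: real_regs_def result_loc_def)

lemma work_loc_eq_iff:
  assumes "k < 6*n" "k' < 6*n"
  shows "work_loc j k = work_loc j' k' \<longleftrightarrow> j = j' \<and> k = k'"
  using row_major_div_mod[OF assms(1), of j] row_major_div_mod[OF assms(2), of j']
  by (auto simp: work_loc_def)

lemma real_regs_upd_work [simp]:
  assumes a: "j < m" "k < 6*n"
  shows "(real_regs M sc R)(work_loc j k := w) = real_regs (M(j := (M j)(k := w))) sc R"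
proof (rule ext)
  fix a
  show "((real_regs M sc R)(work_loc j k := w)) a = real_regs (M(j := (M j)(k := w))) sc R a"
  proof (cases "6*(n*m) \<le> a \<and> a < 12*(n*m)")
    case True
    define j' where "j' = (a - 6*(n*m)) div (6*n)"
    define k' where "k' = (a - 6*(n*m)) mod (6*n)"
    have k': "k' < 6*n" using n_pos by (simp add: k'_def)
    have a_eq: "a = work_loc j' k'" using True by (simp add: work_loc_def j'_def k'_def)
    have "m * (6*n) = 6*(n*m)" by simp
    then have "a - 6*(n*m) < m * (6*n)" using True by linarith
    then have j': "j' < m" unfolding j'_def by (rule less_mult_imp_div_less)
    show ?thesis using a j' k' work_loc_eq_iff[of k k' j j'] unfolding a_eq by auto
  next
    case False
    then have "a \<noteq> work_loc j k" using work_loc_bound[OF a] unfolding work_loc_def by auto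
    with False show ?thesis by (auto simp: real_regs_def input_regs_def)
  qed
qed

lemma real_regs_upd_scratch [simp]: "t < 8 \<Longrightarrow> (real_regs M sc R)(scratch_loc t := w) = real_regs M (sc(t := w)) R"
  by (auto simp: real_regs_def scratch_loc_def fun_eq_iff)

lemma real_regs_upd_result [simp]: "(real_regs M sc R)(result_loc k := w) = real_regs M sc (R(k := w))"
  by (auto simp: real_regs_def result_loc_def fun_eq_iff)

definition laid_out :: "state \<Rightarrow> bool" where
  "laid_out s \<longleftrightarrow> (\<exists>cnt M sc R. s = (int_regs cnt, real_regs M sc R))"

definition ctr_of :: "state \<Rightarrow> nat \<Rightarrow> int" where "ctr_of s v = fst s (ctr_loc v)"
definition work_of :: "state \<Rightarrow> mat" where "work_of s j k = snd s (work_loc j k)"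
definition scratch_of :: "state \<Rightarrow> nat \<Rightarrow> real" where "scratch_of s t = snd s (scratch_loc t)"
definition result_of :: "state \<Rightarrow> vec" where "result_of s k = snd s (result_loc k)"

lemma laid_out_regs [simp]: "laid_out (int_regs cnt, real_regs M sc R)"
  by (auto simp: laid_out_def)

lemma laid_outE: "laid_out s \<Longrightarrow> (\<And>cnt M sc R. s = (int_regs cnt, real_regs M sc R) \<Longrightarrow> thesis) \<Longrightarrow> thesis"
  by (auto simp: laid_out_def)

lemma ctr_of_regs [simp]: "ctr_of (int_regs cnt, r) v = cnt v"
  and work_of_regs [simp]: "j < m \<Longrightarrow> k < 6*n \<Longrightarrow> work_of (i, real_regs M sc R) j k = M j k"
  and scratch_of_regs [simp]: "t < 8 \<Longrightarrow> scratch_of (i, real_regs M sc R) t = sc t"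
  and result_of_regs [simp]: "result_of (i, real_regs M sc R) = R"
  by (simp_all add: ctr_of_def work_of_def scratch_of_def result_of_def fun_eq_iff)

lemma work_loc_distinct [simp]:
  "j < m \<Longrightarrow> k < 6*n \<Longrightarrow> scratch_loc t \<noteq> work_loc j k"
  "j < m \<Longrightarrow> k < 6*n \<Longrightarrow> work_loc j k \<noteq> scratch_loc t"
  "j < m \<Longrightarrow> k < 6*n \<Longrightarrow> result_loc t \<noteq> work_loc j k"
  "j < m \<Longrightarrow> k < 6*n \<Longrightarrow> work_loc j k \<noteq> result_loc t"
  using work_loc_bound[of j k] unfolding scratch_loc_def result_loc_def work_loc_def by linarith+

lemma scratch_result_loc_distinct [simp]:
  "t < 8 \<Longrightarrow> result_loc k \<noteq> scratch_loc t"
  "t < 8 \<Longrightarrow> scratch_loc t \<noteq> result_loc k"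
  "scratch_loc t = scratch_loc t' \<longleftrightarrow> t = t'"
  "result_loc t = result_loc t' \<longleftrightarrow> t = t'"
  by (auto simp: scratch_loc_def result_loc_def)

lemma output_loc_distinct [simp]:
  "\<not> result_loc k < k"
  "\<not> scratch_loc t < 6*n" "scratch_loc t \<noteq> 6*n" "scratch_loc t \<noteq> 6*n + 1"
proof -
  have "6*n \<le> 6*(n*m)" using n_less_m by simp
  then show "\<not> scratch_loc t < 6*n" "scratch_loc t \<noteq> 6*n" "scratch_loc t \<noteq> 6*n + 1"
    unfolding scratch_loc_def using n_pos by linarith+
qed (simp add: result_loc_def)


section \<open>Correctness of the phases\<close>

definition input_matrix :: mat where
  "input_matrix j k = (if k < 3*n then x j k else y j (k - 3*n))"

definition copied_rows :: "nat \<Rightarrow> state \<Rightarrow> bool" where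
  "copied_rows i s \<longleftrightarrow> laid_out s \<and> ctr_of s 1 = int i \<and> result_of s = (\<lambda>_. 0) \<and>
     (\<forall>j<m. \<forall>k<6*n. work_of s j k = (if j < i then input_matrix j k else 0))"

definition copying_row :: "nat \<Rightarrow> nat \<Rightarrow> state \<Rightarrow> bool" where
  "copying_row i kk s \<longleftrightarrow> laid_out s \<and> ctr_of s 1 = int i \<and> ctr_of s 2 = int kk \<and> kk \<le> 3*n \<and>
     result_of s = (\<lambda>_. 0) \<and>
     (\<forall>j<m. \<forall>k<6*n. work_of s j k =
        (if j < i \<or> (j = i \<and> (k < kk \<or> (3*n \<le> k \<and> k < 3*n + kk))) then input_matrix j k else 0))"

lemma wp_copy_row:
  assumes "copied_rows i s" "i < m"
  shows "wp copy_row s (\<lambda>t s'. t \<le> 12*n + 2 \<and> copying_row i (3*n) s')"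
  unfolding copy_row_def
proof (rule wp_for_ctr[where P = "copying_row i" and lo = 0 and hi = "3*n" and T = 3], goal_cases init step stop)
  case init
  show ?case using assms unfolding copied_rows_def copying_row_def by (auto elim!: laid_outE)
next
  case (step kk s')
  then obtain cnt M sc R where "s' = (int_regs cnt, real_regs M sc R)"
    unfolding copying_row_def by (auto elim: laid_outE)
  then show ?case using step assms(2) unfolding copying_row_def
    by (auto simp: less_exp_def inc_ctr_def set_ctr_def input_matrix_def)
next
  case (stop s')
  then show ?case unfolding copying_row_def by (auto elim!: laid_outE simp: less_exp_def)
qed simp_all

lemma wp_copy_input:
  assumes "copied_rows 0 s"
  shows "wp copy_input s (\<lambda>t s'. t \<le> (12*n + 4) * m + 2 \<and> copied_rows m s')"
  unfolding copy_input_def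
proof (rule wp_for_ctr[where P = copied_rows and lo = 0 and hi = m and T = "12*n + 3"], goal_cases init step stop)
  case init
  show ?case using assms unfolding copied_rows_def by (auto elim!: laid_outE)
next
  case (step i s')
  have "beval (less_exp (ctr 1) m_exp) s'"
    using step unfolding copied_rows_def by (auto elim!: laid_outE simp: less_exp_def)
  moreover have "wp (Seq copy_row (inc_ctr 1)) s' (\<lambda>t s''. t \<le> 12*n + 3 \<and> copied_rows (Suc i) s'')"
  proof (rule wp_seqI[OF wp_copy_row[OF step(3,2)]])
    fix t1 s1 assume s1: "t1 \<le> 12*n + 2 \<and> copying_row i (3*n) s1"
    then obtain cnt M sc R where "s1 = (int_regs cnt, real_regs M sc R)"
      unfolding copying_row_def by (auto elim: laid_outE)
    then show "wp (inc_ctr 1) s1 (\<lambda>t2 s2. t1 + t2 \<le> 12*n + 3 \<and> copied_rows (Suc i) s2)"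
      using s1 unfolding copying_row_def copied_rows_def by (auto simp: inc_ctr_def set_ctr_def less_Suc_eq)
  qed
  ultimately show ?case by blast
next
  case (stop s')
  then show ?case unfolding copied_rows_def by (auto elim!: laid_outE simp: less_exp_def)
qed simp_all

lemma init_state_eq: "init_state n m x y z = (int_regs (\<lambda>_. 0), real_regs (\<lambda>_ _. 0) (\<lambda>_. 0) (\<lambda>_. 0))"
proof -
  have "fst (init_state n m x y z) = int_regs (\<lambda>_. 0)"
    by (auto simp: init_state_def int_regs_def fun_eq_iff)
  moreover have "snd (init_state n m x y z) = real_regs (\<lambda>_ _. 0) (\<lambda>_. 0) (\<lambda>_. 0)"
    by (auto simp: init_state_def real_regs_def input_regs_def fun_eq_iff mult.assoc)
  ultimately show ?thesis by (metis prod.collapse)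
qed

lemma copied_rows_gj_invariant:
  assumes s: "copied_rows m s" and y: "\<forall>i<m. \<forall>k<3*n. y i k = Q (x i) k" and Q: "prefix_determined (3*n) Q"
  shows "gj_invariant (3*n) m Q x 0 (work_of s)"
proof -
  have rows: "work_of s j k = input_matrix j k" if "j < m" "k < 6*n" for j k
    using s that by (simp add: copied_rows_def)
  have "Q (work_of s j) k = Q (x j) k" if "j < m" for j k
    using Q rows that unfolding prefix_determined_def by (auto simp: input_matrix_def)
  then have "graph_rows (3*n) m Q (work_of s)"
    using rows y by (simp add: graph_rows_def input_matrix_def)
  moreover have "trunc (3*n) (x i) = trunc (3*n) (work_of s i)" if "i < m" for i
    using rows that by (auto simp: trunc_def input_matrix_def fun_eq_iff)
  then have "spans_rows (3*n) m x (work_of s)"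
    unfolding spans_rows_def by (auto intro: real_fun.span_base)
  ultimately show ?thesis by (simp add: gj_invariant_def reduced_upto_def)
qed

lemma wp_find_pivot:
  assumes s: "laid_out s" "ctr_of s 0 = int c" and c: "c < 6*n"
    and p: "c \<le> p" "p < m" "work_of s p c \<noteq> 0" and zero: "\<And>i. c \<le> i \<Longrightarrow> i < p \<Longrightarrow> work_of s i c = 0"
  shows "wp find_pivot s (\<lambda>t s'. t \<le> 2*m + 2 \<and> laid_out s' \<and> ctr_of s' 0 = int c \<and> ctr_of s' 1 = int p \<and> snd s' = snd s)"
proof -
  obtain cnt M sc R where s0: "s = (int_regs cnt, real_regs M sc R)" using s(1) by (auto elim: laid_outE)
  define P where "P = (\<lambda>i s'. laid_out s' \<and> ctr_of s' 0 = int c \<and> ctr_of s' 1 = int i \<and> snd s' = snd s)"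
  have "wp (While (BAnd (less_exp (ctr 1) m_exp) (is_zero (work_addr (ctr 1) (ctr 0)))) (inc_ctr 1))
      ((fst s)(nat (ieval (ctr_addr 1) s) := ieval (ctr 0) s), snd s) (\<lambda>t s'. t \<le> (1 + 1) * (p - c) + 1 \<and> P p s')"
  proof (rule wp_for[where P = P and lo = c and hi = p and T = 1], goal_cases step stop init)
    case (step i s')
    then obtain cnt' where s': "s' = (int_regs cnt', real_regs M sc R)" "cnt' 0 = int c" "cnt' 1 = int i"
      unfolding P_def s0 by (auto elim!: laid_outE)
    have "M i c = 0" using zero[of i] step p c s0 by simp
    then show ?case using step p c s' unfolding P_def s0
      by (auto simp: less_exp_def is_zero_def inc_ctr_def set_ctr_def)
  next
    case (stop s')
    then obtain cnt' where s': "s' = (int_regs cnt', real_regs M sc R)" "cnt' 0 = int c" "cnt' 1 = int p"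
      unfolding P_def s0 by (auto elim!: laid_outE)
    have "M p c \<noteq> 0" using p s0 c by simp
    then show ?case using p c s' by (auto simp: less_exp_def is_zero_def)
  next
    case init
    show ?case using s unfolding P_def s0 by simp
  qed (use p in simp)
  then show ?thesis unfolding find_pivot_def set_ctr_def P_def
    by simp (erule wp_mono; use p in auto)
qed

lemma wp_swap_pivot:
  assumes s: "laid_out s" "ctr_of s 0 = int c" "ctr_of s 1 = int p" and cp: "c < m" "p < m"
  shows "wp swap_pivot s (\<lambda>t s'. t \<le> 30*n + 2 \<and> laid_out s' \<and> ctr_of s' 0 = int c \<and> ctr_of s' 1 = int p \<and>
     (\<forall>j<m. \<forall>k<6*n. work_of s' j k = swap_rows (work_of s) c p j k) \<and> result_of s' = result_of s)"
proof -
  obtain cnt M sc R where s0: "s = (int_regs cnt, real_regs M sc R)" using s(1) by (auto elim: laid_outE)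
  define P where "P = (\<lambda>kk s'. laid_out s' \<and> ctr_of s' 0 = int c \<and> ctr_of s' 1 = int p \<and> ctr_of s' 2 = int kk \<and>
     (\<forall>j<m. \<forall>k<6*n. work_of s' j k = (if k < kk then swap_rows M c p j k else M j k)) \<and> result_of s' = R)"
  have "wp swap_pivot s (\<lambda>t s'. t \<le> 30*n + 2 \<and> P (6*n) s')"
    unfolding swap_pivot_def
  proof (rule wp_for_ctr[where P = P and lo = 0 and hi = "6*n" and T = 4], goal_cases init step stop)
    case init
    show ?case using s cp unfolding P_def s0 by simp
  next
    case (step kk s')
    then obtain cnt' M' sc' where s': "s' = (int_regs cnt', real_regs M' sc' R)"
      "cnt' 0 = int c" "cnt' 1 = int p" "cnt' 2 = int kk"
      "\<forall>j<m. \<forall>k<6*n. M' j k = (if k < kk then swap_rows M c p j k else M j k)"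
      unfolding P_def by (auto elim!: laid_outE)
    show ?case using step cp s'(2-5) unfolding s'(1) P_def
      by (auto simp: less_exp_def inc_ctr_def set_ctr_def swap_rows_def less_Suc_eq)
  next
    case (stop s')
    then show ?case unfolding P_def by (auto elim!: laid_outE simp: less_exp_def)
  qed simp_all
  then show ?thesis
    by (rule wp_mono) (use cp in \<open>auto simp: P_def s0 swap_rows_def\<close>)
qed

lemma wp_eliminate_row:
  assumes s: "laid_out s" "ctr_of s 0 = int c" "ctr_of s 1 = int i"
    and ci: "c < m" "i < m" "i \<noteq> c" and c: "c < 6*n"
  shows "wp eliminate_row s (\<lambda>t s'. t \<le> 18*n + 3 \<and> laid_out s' \<and> ctr_of s' 0 = int c \<and> ctr_of s' 1 = int i \<and>
     (\<forall>j<m. \<forall>k<6*n. work_of s' j k = (if j = i then clear_column (work_of s) c i k else work_of s j k)) \<and>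
     result_of s' = result_of s)"
proof -
  obtain cnt M sc R where s0: "s = (int_regs cnt, real_regs M sc R)" using s(1) by (auto elim: laid_outE)
  define f where "f = M i c / M c c"
  define P where "P = (\<lambda>kk s'. laid_out s' \<and> ctr_of s' 0 = int c \<and> ctr_of s' 1 = int i \<and> ctr_of s' 2 = int kk \<and>
     scratch_of s' 1 = f \<and> result_of s' = R \<and>
     (\<forall>j<m. \<forall>k<6*n. work_of s' j k = (if j = i \<and> k < kk then M i k - f * M c k else M j k)))"
  have "wp subtract_pivot_row (int_regs cnt, real_regs M (sc(1 := f)) R) (\<lambda>t s'. t \<le> 18*n + 2 \<and> P (6*n) s')"
    unfolding subtract_pivot_row_def
  proof (rule wp_for_ctr[where P = P and lo = 0 and hi = "6*n" and T = 2], goal_cases init step stop)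
    case init
    show ?case using s ci c unfolding P_def s0 by simp
  next
    case (step kk s')
    then obtain cnt' M' sc' where s': "s' = (int_regs cnt', real_regs M' sc' R)"
      "cnt' 0 = int c" "cnt' 1 = int i" "cnt' 2 = int kk" "sc' 1 = f"
      "\<forall>j<m. \<forall>k<6*n. M' j k = (if j = i \<and> k < kk then M i k - f * M c k else M j k)"
      unfolding P_def by (auto elim!: laid_outE)
    show ?case using step ci c s'(2-6) unfolding s'(1) P_def
      by (auto simp: less_exp_def inc_ctr_def set_ctr_def less_Suc_eq)
  next
    case (stop s')
    then show ?case unfolding P_def by (auto elim!: laid_outE simp: less_exp_def)
  qed simp_all
  then show ?thesis unfolding eliminate_row_def
    using s ci c by (simp add: s0 f_def) (erule wp_mono; auto simp: P_def clear_column_def f_def)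
qed

definition clearing_rows :: "mat \<Rightarrow> vec \<Rightarrow> nat \<Rightarrow> nat \<Rightarrow> state \<Rightarrow> bool" where
  "clearing_rows M R c i s \<longleftrightarrow> laid_out s \<and> ctr_of s 0 = int c \<and> result_of s = R \<and>
     (\<forall>j<m. \<forall>k<6*n. work_of s j k = (if j < i then clear_column M c j k else M j k))"

lemma wp_eliminate_other_row:
  assumes inv: "clearing_rows M R c i s" "ctr_of s 1 = int i" and i: "i < m" and c: "c < 3*n"
  shows "wp eliminate_other_row s (\<lambda>t s'. t \<le> 18*n + 4 \<and> clearing_rows M R c (Suc i) s' \<and> ctr_of s' 1 = int i)"
proof (cases "i = c")
  case True
  then show ?thesis using inv unfolding eliminate_other_row_def clearing_rows_def
    by (auto elim!: laid_outE simp: clear_column_def less_Suc_eq)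
next
  case False
  have cm: "c < m" "c < 6*n" using c m_ge by simp_all
  have row_c: "work_of s c k = M c k" if "k < 6*n" for k
    using inv cm that by (auto simp: clearing_rows_def clear_column_def)
  have row_i: "work_of s i k = M i k" if "k < 6*n" for k
    using inv i that by (auto simp: clearing_rows_def)
  have "wp eliminate_row s (\<lambda>t s'. t \<le> 18*n + 3 \<and> laid_out s' \<and> ctr_of s' 0 = int c \<and> ctr_of s' 1 = int i \<and>
     (\<forall>j<m. \<forall>k<6*n. work_of s' j k = (if j = i then clear_column (work_of s) c i k else work_of s j k)) \<and>
     result_of s' = result_of s)"
    using inv i cm False by (intro wp_eliminate_row) (auto simp: clearing_rows_def)
  then have "wp eliminate_row s (\<lambda>t s'. Suc t \<le> 18*n + 4 \<and> clearing_rows M R c (Suc i) s' \<and> ctr_of s' 1 = int i)"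
  proof (rule wp_mono)
    fix t s' assume s': "t \<le> 18*n + 3 \<and> laid_out s' \<and> ctr_of s' 0 = int c \<and> ctr_of s' 1 = int i \<and>
      (\<forall>j<m. \<forall>k<6*n. work_of s' j k = (if j = i then clear_column (work_of s) c i k else work_of s j k)) \<and>
      result_of s' = result_of s"
    have "work_of s' j k = (if j < Suc i then clear_column M c j k else M j k)" if "j < m" "k < 6*n" for j k
      using s' inv that row_c[OF cm(2)] row_c row_i[OF cm(2)] row_i False unfolding clearing_rows_def
      by (auto simp: clear_column_def less_Suc_eq)
    then show "Suc t \<le> 18*n + 4 \<and> clearing_rows M R c (Suc i) s' \<and> ctr_of s' 1 = int i"
      using s' inv unfolding clearing_rows_def by auto
  qed
  then show ?thesis using inv False unfolding eliminate_other_row_def clearing_rows_def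
    by (auto elim!: laid_outE)
qed

lemma wp_eliminate_column:
  assumes s: "laid_out s" "ctr_of s 0 = int c" and c: "c < 3*n"
  shows "wp eliminate_column s
    (\<lambda>t s'. t \<le> (18*n + 6) * m + 2 \<and> clearing_rows (work_of s) (result_of s) c m s' \<and> ctr_of s' 1 = int m)"
  unfolding eliminate_column_def
proof (rule wp_for_ctr[where P = "\<lambda>i s'. clearing_rows (work_of s) (result_of s) c i s' \<and> ctr_of s' 1 = int i"
      and lo = 0 and hi = m and T = "18*n + 5"], goal_cases init step stop)
  case init
  show ?case using s by (auto elim!: laid_outE simp: clearing_rows_def)
next
  case (step i s')
  have "beval (less_exp (ctr 1) m_exp) s'"
    using step by (auto elim!: laid_outE simp: clearing_rows_def less_exp_def)
  moreover have "wp (Seq eliminate_other_row (inc_ctr 1)) s' (\<lambda>t s''. t \<le> 18*n + 5 \<and>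
      clearing_rows (work_of s) (result_of s) c (Suc i) s'' \<and> ctr_of s'' 1 = int (Suc i))"
  proof (rule wp_seqI)
    show "wp eliminate_other_row s' (\<lambda>t s''. t \<le> 18*n + 4 \<and>
        clearing_rows (work_of s) (result_of s) c (Suc i) s'' \<and> ctr_of s'' 1 = int i)"
      using step c by (intro wp_eliminate_other_row) auto
  next
    fix t1 s1 assume s1: "t1 \<le> 18*n + 4 \<and> clearing_rows (work_of s) (result_of s) c (Suc i) s1 \<and> ctr_of s1 1 = int i"
    then obtain cnt M sc R where "s1 = (int_regs cnt, real_regs M sc R)"
      by (auto simp: clearing_rows_def elim: laid_outE)
    then show "wp (inc_ctr 1) s1 (\<lambda>t2 s2. t1 + t2 \<le> 18*n + 5 \<and>
        clearing_rows (work_of s) (result_of s) c (Suc i) s2 \<and> ctr_of s2 1 = int (Suc i))"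
      using s1 by (auto simp: clearing_rows_def inc_ctr_def set_ctr_def)
  qed
  ultimately show ?case by blast
next
  case (stop s')
  then show ?case by (auto elim!: laid_outE simp: clearing_rows_def less_exp_def)
qed simp_all

definition gj_state :: "(vec \<Rightarrow> vec) \<Rightarrow> nat \<Rightarrow> state \<Rightarrow> bool" where
  "gj_state Q c s \<longleftrightarrow> laid_out s \<and> ctr_of s 0 = int c \<and> result_of s = (\<lambda>_. 0) \<and>
     gj_invariant (3*n) m Q x c (work_of s)"

lemma clear_column_cong:
  assumes "\<And>j k. j < m \<Longrightarrow> k < 6*n \<Longrightarrow> A j k = B j k" "c < m" "c < 6*n" "j < m" "k < 6*n"
  shows "clear_column A c j k = clear_column B c j k"
  using assms by (simp add: clear_column_def)

definition pivoted :: "mat \<Rightarrow> nat \<Rightarrow> nat \<Rightarrow> state \<Rightarrow> bool" where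
  "pivoted M c p s \<longleftrightarrow> laid_out s \<and> ctr_of s 0 = int c \<and> result_of s = (\<lambda>_. 0) \<and>
     (\<forall>j<m. \<forall>k<6*n. work_of s j k = clear_column (swap_rows M c p) c j k)"

lemma wp_pivot_step:
  assumes s: "laid_out s" "ctr_of s 0 = int c" "result_of s = (\<lambda>_. 0)" and c: "c < 3*n"
    and p: "c \<le> p" "p < m" "work_of s p c \<noteq> 0" and zero: "\<And>i. c \<le> i \<Longrightarrow> i < p \<Longrightarrow> work_of s i c = 0"
  shows "wp (Seq find_pivot (Seq swap_pivot eliminate_column)) s
    (\<lambda>t s'. t \<le> 2*m + 2 + (30*n + 2 + ((18*n + 6) * m + 2)) \<and> pivoted (work_of s) c p s')"
proof -
  have cm: "c < m" "c < 6*n" using c m_ge by simp_all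
  define P1 where "P1 = (\<lambda>s1. laid_out s1 \<and> ctr_of s1 0 = int c \<and> ctr_of s1 1 = int p \<and> snd s1 = snd s)"
  define P2 where "P2 = (\<lambda>s2. laid_out s2 \<and> ctr_of s2 0 = int c \<and> result_of s2 = (\<lambda>_. 0) \<and>
    (\<forall>j<m. \<forall>k<6*n. work_of s2 j k = swap_rows (work_of s) c p j k))"
  have search: "wp find_pivot s (\<lambda>t s1. t \<le> 2*m + 2 \<and> P1 s1)"
    using wp_find_pivot[of s c p] s cm p zero unfolding P1_def by blast
  have swap: "wp swap_pivot s1 (\<lambda>t s2. t \<le> 30*n + 2 \<and> P2 s2)" if "P1 s1" for s1
  proof -
    have "work_of s1 = work_of s" "result_of s1 = result_of s"
      using that by (auto simp: P1_def work_of_def result_of_def fun_eq_iff)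
    then show ?thesis using wp_swap_pivot[of s1 c p] that s cm p unfolding P1_def P2_def
      by (auto elim: wp_mono)
  qed
  have eliminate: "wp eliminate_column s2 (\<lambda>t s3. t \<le> (18*n + 6) * m + 2 \<and> pivoted (work_of s) c p s3)"
    if "P2 s2" for s2
  proof -
    have "wp eliminate_column s2 (\<lambda>t s3. t \<le> (18*n + 6) * m + 2 \<and>
        clearing_rows (work_of s2) (result_of s2) c m s3 \<and> ctr_of s3 1 = int m)"
      using that c by (intro wp_eliminate_column) (auto simp: P2_def)
    then show ?thesis
    proof (rule wp_mono)
      fix t s3
      assume "t \<le> (18*n + 6) * m + 2 \<and> clearing_rows (work_of s2) (result_of s2) c m s3 \<and> ctr_of s3 1 = int m"
      then show "t \<le> (18*n + 6) * m + 2 \<and> pivoted (work_of s) c p s3"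
        using that cm clear_column_cong[of "work_of s2" "swap_rows (work_of s) c p" c]
        unfolding P2_def pivoted_def clearing_rows_def by auto
    qed
  qed
  have "wp (Seq swap_pivot eliminate_column) s1
      (\<lambda>t s3. t \<le> 30*n + 2 + ((18*n + 6) * m + 2) \<and> pivoted (work_of s) c p s3)" if "P1 s1" for s1
    using swap[OF that] eliminate by (rule wp_Seq_bounded)
  with search show ?thesis by (rule wp_Seq_bounded)
qed

lemma wp_gauss_jordan_column:
  assumes S: "S \<subseteq> {..<m}" "card S = 3*n" "indep_rows (3*n) x S"
    and Q: "row_linear (3*n) Q" "prefix_determined (3*n) Q"
    and s: "gj_state Q c s" and c: "c < 3*n"
  shows "wp (Seq (Seq find_pivot (Seq swap_pivot eliminate_column)) (inc_ctr 0)) s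
     (\<lambda>t s'. t \<le> 2*m + 2 + (30*n + 2 + ((18*n + 6) * m + 2)) + 1 \<and> gj_state Q (Suc c) s')"
proof -
  have inv: "gj_invariant (3*n) m Q x c (work_of s)" using s by (simp add: gj_state_def)
  then have "\<exists>p. c \<le> p \<and> p < m \<and> work_of s p c \<noteq> 0"
    using pivot_exists[OF S] c unfolding gj_invariant_def by blast
  \<comment> \<open>the scan of \<open>find_pivot\<close> stops at the first pivot\<close>
  then obtain p where p: "c \<le> p" "p < m" "work_of s p c \<noteq> 0"
    and zero: "\<And>i. c \<le> i \<Longrightarrow> i < p \<Longrightarrow> work_of s i c = 0"
    by (auto simp: exists_least_iff[of "\<lambda>p. c \<le> p \<and> p < m \<and> work_of s p c \<noteq> 0"])
  have next_column: "wp (inc_ctr 0) s' (\<lambda>t s''. t \<le> 1 \<and> gj_state Q (Suc c) s'')"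
    if s': "pivoted (work_of s) c p s'" for s'
  proof -
    obtain cnt M sc R where s'_eq: "s' = (int_regs cnt, real_regs M sc R)"
      using s' by (auto simp: pivoted_def elim: laid_outE)
    have inv': "gj_invariant (3*n) m Q x (Suc c) (clear_column (swap_rows (work_of s) c p) c)"
      using inv Q(1) p by (rule gj_invariant_step)
    have "clear_column (swap_rows (work_of s) c p) c j k = work_of s' j k"
      if "j < m" "k < 2*(3*n)" for j k
      using s' that by (simp add: pivoted_def)
    then have "gj_invariant (3*n) m Q x (Suc c) (work_of s')"
      using gj_invariant_cong[OF _ Q(2) _ _ inv'] c m_ge by simp
    moreover have "work_of (int_regs (cnt(0 := cnt 0 + 1)), real_regs M sc R) = work_of s'"
      by (simp add: s'_eq work_of_def fun_eq_iff)
    ultimately have "gj_state Q (Suc c) (int_regs (cnt(0 := cnt 0 + 1)), real_regs M sc R)"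
      using s' unfolding s'_eq pivoted_def gj_state_def by simp
    then show ?thesis using s' by (simp add: s'_eq pivoted_def inc_ctr_def set_ctr_def)
  qed
  have "wp (Seq find_pivot (Seq swap_pivot eliminate_column)) s
      (\<lambda>t s'. t \<le> 2*m + 2 + (30*n + 2 + ((18*n + 6) * m + 2)) \<and> pivoted (work_of s) c p s')"
    using s c p zero unfolding gj_state_def by (intro wp_pivot_step) auto
  then show ?thesis using next_column by (rule wp_Seq_bounded)
qed

lemma wp_gauss_jordan:
  assumes S: "S \<subseteq> {..<m}" "card S = 3*n" "indep_rows (3*n) x S"
    and Q: "row_linear (3*n) Q" "prefix_determined (3*n) Q"
    and s: "laid_out s" "result_of s = (\<lambda>_. 0)" "gj_invariant (3*n) m Q x 0 (work_of s)"
  shows "wp gauss_jordan s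
    (\<lambda>t s'. t \<le> (2*m + 2 + (30*n + 2 + ((18*n + 6) * m + 2)) + 2) * (3*n) + 2 \<and> gj_state Q (3*n) s')"
  unfolding gauss_jordan_def
proof (rule wp_for_ctr[where P = "gj_state Q" and lo = 0 and hi = "3*n"
      and T = "2*m + 2 + (30*n + 2 + ((18*n + 6) * m + 2)) + 1"], goal_cases init step stop)
  case init
  obtain cnt M sc R where s0: "s = (int_regs cnt, real_regs M sc R)" using s(1) by (auto elim: laid_outE)
  have "work_of ((fst s)(nat (ieval (ctr_addr 0) s) := ieval (IConst 0) s), snd s) = work_of s"
    by (simp add: work_of_def fun_eq_iff)
  then show ?case using s unfolding gj_state_def by (simp add: s0)
next
  case (step c s')
  then have "beval (less_exp (ctr 0) three_n_exp) s'"
    unfolding gj_state_def by (auto elim!: laid_outE simp: less_exp_def)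
  then show ?case using wp_gauss_jordan_column[OF S Q step(3,2)] by simp
next
  case (stop s')
  then show ?case unfolding gj_state_def by (auto elim!: laid_outE simp: less_exp_def)
qed simp_all


definition normals_of :: "mat \<Rightarrow> vec" where
  "normals_of M k = (if k < n then sqrt 2 * M n (4*n + k) / M n n
     else if 3*n \<le> k \<and> k < 4*n then sqrt 2 * M n (5*n + (k - 3*n)) / M n n else 0)"

lemma wp_read_normals:
  assumes s: "s = (int_regs cnt, real_regs M sc (\<lambda>_. 0))"
  shows "wp read_normals s (\<lambda>t s'. t \<le> 4*n + 2 \<and> (\<exists>cnt'. s' = (int_regs cnt', real_regs M sc (normals_of M))))"
proof -
  define R where "R = (\<lambda>kk k. if k < kk \<or> (3*n \<le> k \<and> k < 3*n + kk) then normals_of M k else 0)"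
  define P where "P = (\<lambda>kk s'. \<exists>cnt'. s' = (int_regs cnt', real_regs M sc (R kk)) \<and> cnt' 2 = int kk)"
  have "wp read_normals s (\<lambda>t s'. t \<le> 4*n + 2 \<and> P n s')"
    unfolding read_normals_def
  proof (rule wp_for_ctr[where P = P and lo = 0 and hi = n and T = 3], goal_cases init step stop)
    case init
    have "R 0 = (\<lambda>_. 0)" by (auto simp: R_def)
    then show ?case unfolding P_def s by (auto intro!: exI[of _ "cnt(2 := 0)"])
  next
    case (step kk s')
    then obtain cnt' where s': "s' = (int_regs cnt', real_regs M sc (R kk))" "cnt' 2 = int kk"
      unfolding P_def by auto
    have "(R kk)(kk := normals_of M kk, 3*n + kk := normals_of M (3*n + kk)) = R (Suc kk)"
      using step by (auto simp: R_def fun_eq_iff)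
    moreover have "normals_of M kk = sqrt 2 * M n (4*n + kk) / M n n"
      "normals_of M (3*n + kk) = sqrt 2 * M n (5*n + kk) / M n n"
      using step by (auto simp: normals_of_def)
    ultimately show ?case using step n_less_m s'(2) unfolding s'(1) P_def
      by (simp add: less_exp_def inc_ctr_def set_ctr_def sqrt2_exp_def)
        (auto intro!: exI[of _ "cnt'(2 := int kk + 1)"])
  next
    case (stop s')
    then show ?case unfolding P_def by (auto simp: less_exp_def)
  qed simp_all
  moreover have "R n = normals_of M"
    by (auto simp: R_def fun_eq_iff normals_of_def)
  ultimately show ?thesis by (elim wp_mono) (auto simp: P_def)
qed

definition dot1 :: "vec \<Rightarrow> nat \<Rightarrow> real" where
  "dot1 R i = (\<Sum>k<3*n. R k * x i k)"

definition dot2 :: "vec \<Rightarrow> nat \<Rightarrow> real" where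
  "dot2 R i = (\<Sum>k<3*n. R (3*n + k) * x i k)"

lemma wp_dot_products:
  assumes s: "laid_out s" "ctr_of s 1 = int i" and i: "i < m"
  shows "wp dot_products s (\<lambda>t s'. t \<le> 12*n + 4 \<and> laid_out s' \<and> ctr_of s' 1 = int i \<and>
    result_of s' = result_of s \<and> scratch_of s' 2 = dot1 (result_of s) i \<and> scratch_of s' 3 = dot2 (result_of s) i \<and>
    (\<forall>t. 4 \<le> t \<and> t < 8 \<longrightarrow> scratch_of s' t = scratch_of s t))"
proof -
  obtain cnt M sc R where s0: "s = (int_regs cnt, real_regs M sc R)" using s(1) by (auto elim: laid_outE)
  define P where "P = (\<lambda>kk s'. laid_out s' \<and> ctr_of s' 1 = int i \<and> ctr_of s' 2 = int kk \<and> result_of s' = R \<and>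
    scratch_of s' 2 = (\<Sum>k<kk. R k * x i k) \<and> scratch_of s' 3 = (\<Sum>k<kk. R (3*n + k) * x i k) \<and>
    (\<forall>t. 4 \<le> t \<and> t < 8 \<longrightarrow> scratch_of s' t = sc t))"
  have "wp dot_loop (int_regs cnt, real_regs M (sc(2 := 0, 3 := 0)) R) (\<lambda>t s'. t \<le> 12*n + 2 \<and> P (3*n) s')"
    unfolding dot_loop_def
  proof (rule wp_for_ctr[where P = P and lo = 0 and hi = "3*n" and T = 3], goal_cases init step stop)
    case init
    show ?case using s unfolding P_def s0 by simp
  next
    case (step kk s')
    then obtain cnt' M' sc' where s': "s' = (int_regs cnt', real_regs M' sc' R)" "cnt' 1 = int i" "cnt' 2 = int kk"
      "sc' 2 = (\<Sum>k<kk. R k * x i k)" "sc' 3 = (\<Sum>k<kk. R (3*n + k) * x i k)" "\<forall>t. 4 \<le> t \<and> t < 8 \<longrightarrow> sc' t = sc t"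
      unfolding P_def by (auto elim!: laid_outE)
    show ?case using step i s'(2-6) unfolding s'(1) P_def
      by (auto simp: less_exp_def inc_ctr_def set_ctr_def)
  next
    case (stop s')
    then show ?case unfolding P_def by (auto elim!: laid_outE simp: less_exp_def)
  qed simp_all
  then show ?thesis unfolding dot_products_def s0
    by simp (erule wp_mono; auto simp: P_def dot1_def dot2_def)
qed

primrec dot_bound :: "vec \<Rightarrow> nat \<Rightarrow> real" where
  "dot_bound R 0 = 1"
| "dot_bound R (Suc i) = dot_bound R i + sqrt (dot1 R i * dot1 R i) + sqrt (dot2 R i * dot2 R i)"

primrec max_positive :: "real \<Rightarrow> vec \<Rightarrow> nat \<Rightarrow> real" where
  "max_positive B d 0 = - B"
| "max_positive B d (Suc i) = (if z i \<and> max_positive B d i \<le> d i then d i else max_positive B d i)"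

lemma wp_bound_pass:
  assumes s: "laid_out s"
  shows "wp bound_pass s (\<lambda>t s'. t \<le> (12*n + 7) * m + 3 \<and> laid_out s' \<and> result_of s' = result_of s \<and>
    scratch_of s' 4 = dot_bound (result_of s) m)"
proof -
  obtain cnt M sc R where s0: "s = (int_regs cnt, real_regs M sc R)" using s by (auto elim: laid_outE)
  define P where "P = (\<lambda>i s'. laid_out s' \<and> ctr_of s' 1 = int i \<and> result_of s' = R \<and> scratch_of s' 4 = dot_bound R i)"
  have "wp bound_loop (int_regs cnt, real_regs M (sc(4 := 1)) R) (\<lambda>t s'. t \<le> (12*n + 7) * m + 2 \<and> P m s')"
    unfolding bound_loop_def
  proof (rule wp_for_ctr[where P = P and lo = 0 and hi = m and T = "12*n + 6"], goal_cases init step stop)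
    case init
    show ?case unfolding P_def by simp
  next
    case (step i s')
    then have s': "laid_out s'" "ctr_of s' 1 = int i" "result_of s' = R" "scratch_of s' 4 = dot_bound R i"
      unfolding P_def by auto
    have "beval (less_exp (ctr 1) m_exp) s'" using s' step by (auto elim!: laid_outE simp: less_exp_def)
    moreover have "wp (Seq (Seq dot_products (RStore (scratch_addr 4) (RAdd (RAdd (RLoad (scratch_addr 4))
        (abs_exp (RLoad (scratch_addr 2)))) (abs_exp (RLoad (scratch_addr 3)))))) (inc_ctr 1)) s'
        (\<lambda>t s''. t \<le> 12*n + 6 \<and> P (Suc i) s'')"
      using wp_dot_products[OF s'(1,2) step(2)] unfolding wp_Seq
      by (rule wp_mono, elim conjE laid_outE)
        (use s'(3,4) in \<open>simp add: inc_ctr_def set_ctr_def abs_exp_def P_def\<close>)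
    ultimately show ?case by blast
  next
    case (stop s')
    then show ?case unfolding P_def by (auto elim!: laid_outE simp: less_exp_def)
  qed simp_all
  then show ?thesis unfolding bound_pass_def s0
    by simp (erule wp_mono; auto simp: P_def)
qed

lemma wp_threshold_pass:
  assumes s: "laid_out s" "scratch_of s 4 = B"
  shows "wp threshold_pass s (\<lambda>t s'. t \<le> (12*n + 11) * m + 4 \<and> laid_out s' \<and> result_of s' = result_of s \<and>
     scratch_of s' 5 = max_positive B (dot1 (result_of s)) m \<and> scratch_of s' 6 = max_positive B (dot2 (result_of s)) m)"
proof -
  obtain cnt M sc R where s0: "s = (int_regs cnt, real_regs M sc R)" using s(1) by (auto elim: laid_outE)
  have B: "sc 4 = B" using s by (simp add: s0)
  define P where "P = (\<lambda>i s'. laid_out s' \<and> ctr_of s' 1 = int i \<and> result_of s' = R \<and> scratch_of s' 4 = B \<and>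
     scratch_of s' 5 = max_positive B (dot1 R) i \<and> scratch_of s' 6 = max_positive B (dot2 R) i)"
  have "wp threshold_loop (int_regs cnt, real_regs M (sc(5 := - B, 6 := - B)) R)
      (\<lambda>t s'. t \<le> (12*n + 11) * m + 2 \<and> P m s')"
    unfolding threshold_loop_def
  proof (rule wp_for_ctr[where P = P and lo = 0 and hi = m and T = "12*n + 10"], goal_cases init step stop)
    case init
    show ?case unfolding P_def using B by simp
  next
    case (step i s')
    then have s': "laid_out s'" "ctr_of s' 1 = int i" "result_of s' = R" "scratch_of s' 4 = B"
      "scratch_of s' 5 = max_positive B (dot1 R) i" "scratch_of s' 6 = max_positive B (dot2 R) i"
      unfolding P_def by auto
    have "beval (less_exp (ctr 1) m_exp) s'" using s' step by (auto elim!: laid_outE simp: less_exp_def)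
    moreover have "wp (Seq (Seq dot_products (If (ILe (IConst 1) (label_exp (ctr 1)))
        (Seq (raise_threshold 5 2) (raise_threshold 6 3)) Skip)) (inc_ctr 1)) s'
        (\<lambda>t s''. t \<le> 12*n + 10 \<and> P (Suc i) s'')"
      using wp_dot_products[OF s'(1,2) step(2)] unfolding wp_Seq
      by (rule wp_mono, elim conjE laid_outE)
        (use s'(3-6) step(2) in \<open>auto simp: inc_ctr_def set_ctr_def raise_threshold_def P_def\<close>)
    ultimately show ?case by blast
  next
    case (stop s')
    then show ?case unfolding P_def by (auto elim!: laid_outE simp: less_exp_def)
  qed simp_all
  then show ?thesis unfolding threshold_pass_def s0
    by (simp add: B) (erule wp_mono; auto simp: P_def)
qed

lemma wp_write_output:
  assumes s: "laid_out s"
  shows "wp write_output s (\<lambda>t s'. t \<le> 18*n + 4 \<and> (\<forall>k<6*n. snd s' k = result_of s k) \<and>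
     snd s' (6*n) = scratch_of s 5 \<and> snd s' (6*n + 1) = scratch_of s 6)"
proof -
  obtain cnt M sc R where s0: "s = (int_regs cnt, real_regs M sc R)" using s by (auto elim: laid_outE)
  define P where "P = (\<lambda>kk s'. (\<exists>cnt'. s' = (int_regs cnt', \<lambda>a. if a < kk then R a else real_regs M sc R a) \<and>
      cnt' 2 = int kk))"
  have "wp copy_result s (\<lambda>t s'. t \<le> 18*n + 2 \<and> P (6*n) s')"
    unfolding copy_result_def
  proof (rule wp_for_ctr[where P = P and lo = 0 and hi = "6*n" and T = 2], goal_cases init step stop)
    case init
    show ?case unfolding P_def s0 by (auto simp: fun_eq_iff)
  next
    case (step kk s')
    then obtain cnt' where s': "s' = (int_regs cnt', \<lambda>a. if a < kk then R a else real_regs M sc R a)"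
      "cnt' 2 = int kk"
      unfolding P_def by blast
    have "(\<lambda>a. if a < kk then R a else real_regs M sc R a)(kk := R kk) =
        (\<lambda>a. if a < Suc kk then R a else real_regs M sc R a)"
      by (auto simp: fun_eq_iff)
    then show ?case using step s'(2) unfolding s'(1) P_def
      by (simp add: less_exp_def inc_ctr_def set_ctr_def) (auto intro!: exI[of _ "cnt'(2 := int kk + 1)"])
  next
    case (stop s')
    then show ?case unfolding P_def by (auto simp: less_exp_def)
  qed simp_all
  then show ?thesis unfolding write_output_def
  proof (rule wp_seqI)
    fix t1 s1 assume s1: "t1 \<le> 18*n + 2 \<and> P (6*n) s1"
    then obtain cnt' where "s1 = (int_regs cnt', \<lambda>a. if a < 6*n then R a else real_regs M sc R a)"
      unfolding P_def by blast
    then show "wp (Seq (RStore six_n_exp (RLoad (scratch_addr 5))) (RStore (IAdd six_n_exp (IConst 1))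
        (RLoad (scratch_addr 6)))) s1 (\<lambda>t2 s2. t1 + t2 \<le> 18*n + 4 \<and> (\<forall>k<6*n. snd s2 k = result_of s k) \<and>
        snd s2 (6*n) = scratch_of s 5 \<and> snd s2 (6*n + 1) = scratch_of s 6)"
      using s1 by (simp add: s0)
  qed
qed


section \<open>Recovering the classifier\<close>

definition padded_normals :: "vec \<Rightarrow> vec \<Rightarrow> vec" where
  "padded_normals r1 r2 k = (if k < n then r1 k else if 3*n \<le> k \<and> k < 4*n then r2 (k - 3*n) else 0)"

lemma sum_padded_normals:
  assumes "\<And>k. g 0 k = 0"
  shows "(\<Sum>k<3*n. g (padded_normals r1 r2 k) k) = (\<Sum>k<n. g (r1 k) k)"
    and "(\<Sum>k<3*n. g (padded_normals r1 r2 (3*n + k)) k) = (\<Sum>k<n. g (r2 k) k)"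
proof -
  have "(\<Sum>k<3*n. g (padded_normals r1 r2 k) k) = (\<Sum>k<n. g (padded_normals r1 r2 k) k)"
    using assms by (intro sum.mono_neutral_right) (auto simp: padded_normals_def)
  also have "\<dots> = (\<Sum>k<n. g (r1 k) k)" by (intro sum.cong) (auto simp: padded_normals_def)
  finally show "(\<Sum>k<3*n. g (padded_normals r1 r2 k) k) = (\<Sum>k<n. g (r1 k) k)" .
  have "(\<Sum>k<3*n. g (padded_normals r1 r2 (3*n + k)) k) = (\<Sum>k<n. g (padded_normals r1 r2 (3*n + k)) k)"
    using assms by (intro sum.mono_neutral_right) (auto simp: padded_normals_def)
  also have "\<dots> = (\<Sum>k<n. g (r2 k) k)" by (intro sum.cong) (auto simp: padded_normals_def)
  finally show "(\<Sum>k<3*n. g (padded_normals r1 r2 (3*n + k)) k) = (\<Sum>k<n. g (r2 k) k)" .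
qed

lemma reduced_pivot_row_n:
  assumes inv: "gj_invariant (3*n) m (Qmap n F r1 r2) x (3*n) M"
  shows "M n n \<noteq> 0" and "\<And>k. k < 2*n \<Longrightarrow> M n (4*n + k) = F r1 r2 k 0 * M n n"
proof -
  have red: "reduced_upto m (3*n) M" and graph: "graph_rows (3*n) m (Qmap n F r1 r2) M"
    using inv by (auto simp: gj_invariant_def)
  show "M n n \<noteq> 0" using red n_pos by (simp add: reduced_upto_def)
  fix k assume k: "k < 2*n"
  have "M n (3*n + (n + k)) = Qmap n F r1 r2 (M n) (n + k)"
  proof -
    have "n + k < 3*n" using k by simp
    then show ?thesis using graph n_less_m unfolding graph_rows_def by blast
  qed
  also have "\<dots> = (\<Sum>b<2*n. F r1 r2 k b * M n (n + b))" by (simp add: Qmap_def)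
  also have "\<dots> = (\<Sum>b\<in>{0}. F r1 r2 k b * M n (n + b))"
    using red n_pos by (intro sum.mono_neutral_right) (auto simp: reduced_upto_def)
  finally show "M n (4*n + k) = F r1 r2 k 0 * M n n" by (simp add: add.assoc)
qed

lemma normals_of_reduced:
  assumes F: "admissible_F n F" and r: "unit_vec n r1" "unit_vec n r2"
    and s: "gj_state (Qmap n F r1 r2) (3*n) s" "s = (int_regs cnt, real_regs M sc R)"
  shows "normals_of M = padded_normals r1 r2"
proof
  fix k
  have inv: "gj_invariant (3*n) m (Qmap n F r1 r2) x (3*n) (work_of s)"
    using s(1) by (simp add: gj_state_def)
  have work: "work_of s j k = M j k" if "j < m" "k < 6*n" for j k using that by (simp add: s(2))
  have Mnn: "M n n \<noteq> 0" using reduced_pivot_row_n(1)[OF inv] work[of n n] n_less_m n_pos by simp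
  have row_n: "M n (4*n + k) = F r1 r2 k 0 * M n n" if "k < 2*n" for k
    using reduced_pivot_row_n(2)[OF inv that] work[of n "4*n + k"] work[of n n] n_less_m that by simp
  have F_col: "F r1 r2 k 0 = r1 k / sqrt 2" "F r1 r2 (n + k) 0 = r2 k / sqrt 2" if "k < n" for k
    using F r that unfolding admissible_F_def by auto
  consider "k < n" | "3*n \<le> k" "k < 4*n" | "\<not> k < n" "\<not> (3*n \<le> k \<and> k < 4*n)" by linarith
  then show "normals_of M k = padded_normals r1 r2 k"
  proof cases
    case 1
    then show ?thesis using row_n[of k] F_col[of k] Mnn by (simp add: normals_of_def padded_normals_def)
  next
    case 2
    then have "5*n + (k - 3*n) = 4*n + (n + (k - 3*n))" by simp
    then show ?thesis using 2 row_n[of "n + (k - 3*n)"] F_col[of "k - 3*n"] Mnn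
      by (simp add: normals_of_def padded_normals_def)
  qed (auto simp: normals_of_def padded_normals_def)
qed

lemma dot_bound_mono: "i \<le> i' \<Longrightarrow> dot_bound R i \<le> dot_bound R i'"
  by (induction i') (auto simp: le_Suc_eq intro: order_trans[OF _ add_increasing2[OF real_sqrt_ge_zero]])

lemma dot_bound_gt:
  assumes "j < i"
  shows "- dot_bound R i < dot1 R j" "- dot_bound R i < dot2 R j"
proof -
  have "1 \<le> dot_bound R j" using dot_bound_mono[of 0 j R] by simp
  then have "1 + \<bar>dot1 R j\<bar> + \<bar>dot2 R j\<bar> \<le> dot_bound R (Suc j)"
    by (simp add: real_sqrt_mult_self)
  moreover have "dot_bound R (Suc j) \<le> dot_bound R i" using assms by (intro dot_bound_mono) simp
  ultimately show "- dot_bound R i < dot1 R j" "- dot_bound R i < dot2 R j" by linarith+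
qed

lemma max_positive_ge: "j < i \<Longrightarrow> z j \<Longrightarrow> d j \<le> max_positive B d i"
  by (induction i) (auto simp: less_Suc_eq)

lemma max_positive_cases: "max_positive B d i = - B \<or> (\<exists>j<i. z j \<and> max_positive B d i = d j)"
  by (induction i) (auto intro: less_SucI)

text \<open>A point below both thresholds is positive: each threshold is either -B, which no product
  reaches, or the product of a positive point, hence at most the true constant.\<close>
lemma max_positive_classifies:
  assumes below: "\<forall>j<m. - B < d1 j \<and> - B < d2 j"
    and labels: "\<forall>i<m. z i \<longleftrightarrow> (d1 i \<le> c1 \<and> d2 i \<le> c2)" and i: "i < m"
  shows "(d1 i \<le> max_positive B d1 m \<and> d2 i \<le> max_positive B d2 m) \<longleftrightarrow> z i"
proof
  assume "z i"
  then show "d1 i \<le> max_positive B d1 m \<and> d2 i \<le> max_positive B d2 m"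
    using i by (simp add: max_positive_ge)
next
  assume h: "d1 i \<le> max_positive B d1 m \<and> d2 i \<le> max_positive B d2 m"
  have "max_positive B d1 m = - B \<or> max_positive B d1 m \<le> c1"
    using max_positive_cases[of B d1 m] labels by fastforce
  moreover have "max_positive B d2 m = - B \<or> max_positive B d2 m \<le> c2"
    using max_positive_cases[of B d2 m] labels by fastforce
  ultimately have "d1 i \<le> c1 \<and> d2 i \<le> c2" using h below i by force
  then show "z i" using labels i by auto
qed

definition correct_output :: "state \<Rightarrow> bool" where
  "correct_output s \<longleftrightarrow> unit_vec (3*n) (out_r1 n s) \<and> unit_vec (3*n) (out_r2 n s) \<and>
     (\<forall>i<m. hyp n (out_r1 n s) (out_r2 n s) (out_c1 n s) (out_c2 n s) (x i) = z i)"

lemma correct_outputI: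
  assumes r: "unit_vec n r1" "unit_vec n r2"
    and labels: "\<forall>i<m. z i \<longleftrightarrow> ((\<Sum>k<n. r1 k * x i k) \<le> c1 \<and> (\<Sum>k<n. r2 k * x i k) \<le> c2)"
    and R: "R = padded_normals r1 r2" "\<forall>k<6*n. snd s k = R k"
    and c: "out_c1 n s = max_positive (dot_bound R m) (dot1 R) m"
      "out_c2 n s = max_positive (dot_bound R m) (dot2 R) m"
  shows "correct_output s"
proof -
  have out1: "out_r1 n s k = R k" and out2: "out_r2 n s k = R (3*n + k)" if "k < 3*n" for k
    using R(2) that by (auto simp: out_r1_def out_r2_def)
  have "(\<Sum>k<3*n. (out_r1 n s k)\<^sup>2) = (\<Sum>k<3*n. (padded_normals r1 r2 k)\<^sup>2)"
    using out1 R(1) by (intro sum.cong) auto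
  also have "\<dots> = (\<Sum>k<n. (r1 k)\<^sup>2)" by (rule sum_padded_normals(1)) simp
  finally have unit1: "unit_vec (3*n) (out_r1 n s)" using r(1) by (simp add: unit_vec_def)
  have "(\<Sum>k<3*n. (out_r2 n s k)\<^sup>2) = (\<Sum>k<3*n. (padded_normals r1 r2 (3*n + k))\<^sup>2)"
    using out2 R(1) by (intro sum.cong) auto
  also have "\<dots> = (\<Sum>k<n. (r2 k)\<^sup>2)" by (rule sum_padded_normals(2)) simp
  finally have unit2: "unit_vec (3*n) (out_r2 n s)" using r(2) by (simp add: unit_vec_def)
  have "hyp n (out_r1 n s) (out_r2 n s) (out_c1 n s) (out_c2 n s) (x i) = z i" if i: "i < m" for i
  proof -
    have "(\<Sum>k<3*n. out_r1 n s k * x i k) = dot1 R i" "(\<Sum>k<3*n. out_r2 n s k * x i k) = dot2 R i"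
      unfolding dot1_def dot2_def using out1 out2 by (auto intro: sum.cong)
    moreover have "dot1 R i' = (\<Sum>k<n. r1 k * x i' k)" "dot2 R i' = (\<Sum>k<n. r2 k * x i' k)" for i'
      unfolding dot1_def dot2_def R(1) by (rule sum_padded_normals(1), simp, rule sum_padded_normals(2), simp)
    then have "\<forall>i<m. z i \<longleftrightarrow> (dot1 R i \<le> c1 \<and> dot2 R i \<le> c2)" using labels by simp
    then have "(dot1 R i \<le> out_c1 n s \<and> dot2 R i \<le> out_c2 n s) \<longleftrightarrow> z i"
      unfolding c using max_positive_classifies dot_bound_gt i by blast
    ultimately show ?thesis by (simp add: hyp_def)
  qed
  with unit1 unit2 show ?thesis by (simp add: correct_output_def)
qed

lemma wp_classify:
  assumes r: "unit_vec n r1" "unit_vec n r2"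
    and labels: "\<forall>i<m. z i \<longleftrightarrow> ((\<Sum>k<n. r1 k * x i k) \<le> c1 \<and> (\<Sum>k<n. r2 k * x i k) \<le> c2)"
    and s: "laid_out s" "result_of s = padded_normals r1 r2"
  shows "wp (Seq bound_pass (Seq threshold_pass write_output)) s
    (\<lambda>t s'. t \<le> (12*n + 7) * m + 3 + ((12*n + 11) * m + 4 + (18*n + 4)) \<and> correct_output s')"
proof -
  define R where "R = padded_normals r1 r2"
  define B where "B = dot_bound R m"
  have bound: "wp bound_pass s (\<lambda>t s1. t \<le> (12*n + 7) * m + 3 \<and> laid_out s1 \<and> result_of s1 = R \<and> scratch_of s1 4 = B)"
    using wp_bound_pass[OF s(1)] s(2) unfolding R_def B_def by (elim wp_mono) auto
  have thresholds: "wp threshold_pass s1 (\<lambda>t s2. t \<le> (12*n + 11) * m + 4 \<and> laid_out s2 \<and> result_of s2 = R \<and>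
      scratch_of s2 5 = max_positive B (dot1 R) m \<and> scratch_of s2 6 = max_positive B (dot2 R) m)"
    if "laid_out s1 \<and> result_of s1 = R \<and> scratch_of s1 4 = B" for s1
  proof -
    have "laid_out s1" "scratch_of s1 4 = B" "result_of s1 = R" using that by auto
    then show ?thesis using wp_threshold_pass[of s1 B] by simp
  qed
  have final: "wp write_output s2 (\<lambda>t s3. t \<le> 18*n + 4 \<and> correct_output s3)"
    if s2: "laid_out s2 \<and> result_of s2 = R \<and>
      scratch_of s2 5 = max_positive B (dot1 R) m \<and> scratch_of s2 6 = max_positive B (dot2 R) m" for s2
    using wp_write_output[OF conjunct1[OF s2]]
  proof (rule wp_mono, clarify)
    fix t and s3 :: state assume "\<forall>k<6*n. snd s3 k = result_of s2 k" "snd s3 (6*n) = scratch_of s2 5"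
      "snd s3 (6*n + 1) = scratch_of s2 6"
    then show "correct_output s3"
      using s2 by (intro correct_outputI[OF r labels R_def]) (auto simp: out_c1_def out_c2_def B_def)
  qed
  have "wp (Seq threshold_pass write_output) s1
      (\<lambda>t s3. t \<le> (12*n + 11) * m + 4 + (18*n + 4) \<and> correct_output s3)"
    if "laid_out s1 \<and> result_of s1 = R \<and> scratch_of s1 4 = B" for s1
    using thresholds[OF that] final by (rule wp_Seq_bounded)
  with bound show ?thesis by (rule wp_Seq_bounded)
qed

lemma wp_learner:
  assumes F: "admissible_F n F" and inst: "mm_instance n m F x y z" and indep: "has_3n_indep n m x"
  shows "wp learner (init_state n m x y z) (\<lambda>t s'. t \<le> learner_time n m \<and> correct_output s')"
proof -
  obtain r1 r2 c1 c2 where r: "unit_vec n r1" "unit_vec n r2"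
    and labels: "\<forall>i<m. z i \<longleftrightarrow> ((\<Sum>k<n. r1 k * x i k) \<le> c1 \<and> (\<Sum>k<n. r2 k * x i k) \<le> c2)"
    and y: "\<forall>i<m. \<forall>k<3*n. y i k = Qmap n F r1 r2 (x i) k"
    using inst unfolding mm_instance_def by blast
  obtain S where S: "S \<subseteq> {..<m}" "card S = 3*n" "indep_rows (3*n) x S"
    using indep unfolding has_3n_indep_iff by blast
  note Q = Qmap_row_linear[of n F r1 r2] Qmap_prefix_determined[of n F r1 r2]
  have copy: "wp copy_input (init_state n m x y z) (\<lambda>t s1. t \<le> (12*n + 4) * m + 2 \<and> copied_rows m s1)"
    by (rule wp_copy_input) (simp add: init_state_eq copied_rows_def)
  have reduce: "wp gauss_jordan s1 (\<lambda>t s2. t \<le> (2*m + 2 + (30*n + 2 + ((18*n + 6) * m + 2)) + 2) * (3*n) + 2 \<and>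
      gj_state (Qmap n F r1 r2) (3*n) s2)" if "copied_rows m s1" for s1
    using that copied_rows_gj_invariant[OF that y Q(2)]
    by (intro wp_gauss_jordan[OF S Q]) (auto simp: copied_rows_def)
  have normals: "wp read_normals s2 (\<lambda>t s3. t \<le> 4*n + 2 \<and> laid_out s3 \<and> result_of s3 = padded_normals r1 r2)"
    if s2: "gj_state (Qmap n F r1 r2) (3*n) s2" for s2
  proof -
    obtain cnt M sc where s2_eq: "s2 = (int_regs cnt, real_regs M sc (\<lambda>_. 0))"
      using s2 by (auto simp: gj_state_def elim!: laid_outE)
    have "normals_of M = padded_normals r1 r2" by (rule normals_of_reduced[OF F r s2 s2_eq])
    then show ?thesis using wp_read_normals[OF s2_eq] by (elim wp_mono) auto
  qed
  have classify: "wp (Seq read_normals (Seq bound_pass (Seq threshold_pass write_output))) s2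
      (\<lambda>t s'. t \<le> 4*n + 2 + ((12*n + 7) * m + 3 + ((12*n + 11) * m + 4 + (18*n + 4))) \<and> correct_output s')"
    if "gj_state (Qmap n F r1 r2) (3*n) s2" for s2
    using normals[OF that] wp_classify[OF r labels] by (rule wp_Seq_bounded) auto
  have "wp (Seq gauss_jordan (Seq read_normals (Seq bound_pass (Seq threshold_pass write_output)))) s1
      (\<lambda>t s'. t \<le> (2*m + 2 + (30*n + 2 + ((18*n + 6) * m + 2)) + 2) * (3*n) + 2 +
        (4*n + 2 + ((12*n + 7) * m + 3 + ((12*n + 11) * m + 4 + (18*n + 4)))) \<and> correct_output s')"
    if "copied_rows m s1" for s1
    using reduce[OF that] classify by (rule wp_Seq_bounded)
  with copy show ?thesis unfolding learner_def learner_time_def by (rule wp_Seq_bounded)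
qed

end

theorem lemma4:
  "\<exists>(prog :: com) (C :: nat). \<forall>n m F x y z.
     admissible_F n F \<and> mm_instance n m F x y z \<and> m \<ge> 3*n \<and> has_3n_indep n m x \<longrightarrow>
     (\<exists>t s'. exec prog (init_state n m x y z) t s' \<and> t \<le> C * m * n\<^sup>2 \<and>
        unit_vec (3*n) (out_r1 n s') \<and> unit_vec (3*n) (out_r2 n s') \<and>
        (\<forall>i<m. hyp n (out_r1 n s') (out_r2 n s') (out_c1 n s') (out_c2 n s') (x i) = z i))"
proof (rule exI[of _ learner], rule exI[of _ 400], intro allI impI)
  fix n m F x y z
  assume h: "admissible_F n F \<and> mm_instance n m F x y z \<and> 3*n \<le> m \<and> has_3n_indep n m x"
  \<comment> \<open>for n = 0 there are no unit vectors, so the hypothesis is void\<close>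
  then have "0 < n" by (intro gr0I) (auto simp: mm_instance_def unit_vec_def)
  with h interpret layout n m x y z by unfold_locales auto
  have "wp learner (init_state n m x y z) (\<lambda>t s'. t \<le> learner_time n m \<and> correct_output s')"
    using h by (intro wp_learner) auto
  moreover have "learner_time n m \<le> 400 * m * n\<^sup>2" using h n_pos by (intro learner_time_bound) auto
  ultimately show "\<exists>t s'. exec learner (init_state n m x y z) t s' \<and> t \<le> 400 * m * n\<^sup>2 \<and>
      unit_vec (3*n) (out_r1 n s') \<and> unit_vec (3*n) (out_r2 n s') \<and>
      (\<forall>i<m. hyp n (out_r1 n s') (out_r2 n s') (out_c1 n s') (out_c2 n s') (x i) = z i)"
    unfolding wp_def correct_output_def by (meson order_trans)
qed

end
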